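(* Assume $X_0\sim\nu$, conditions (H1) and (H2) hold, $\mathcal B\subset L^3(\nu)$, $\xi\in\mathcal B$, and $\sigma^2>0$. For $n\ge1$ let $U_n=\check\xi(X_n)-Q\check\xi(X_{n-1})$ and $T_n=U_1+\dots+U_n$. Then there is $C>0$ such that for all $n\ge1$ and all $t\in[-\sqrt n,\sqrt n]$, $$\big|\mathbb E[e^{itT_n/(\sigma\sqrt n)}]-e^{-t^2/2}\big|\le C\frac{|t|}{\sqrt n}.$$
   Context: $(E,\mathcal E)$ measurable space, $Q$ a transition probability with invariant probability $\nu$, $(X_n)_{n\ge0}$ a Markov chain with transition $Q$, $\xi:E\to\mathbb R$ measurable with $\nu(\xi)=0$. $\mathbf 1$ is the constant function 1. For a Banach space $(\mathcal B,\|\cdot\|)$ of measurable complex functions on $E$: (H1) means $Q$ is $\mathcal B$-geometrically ergodic, i.e. $\mathbf 1\in\mathcal B$, $\mathcal B$ embeds continuously in $L^1(\nu)$, $Q$ is bounded on $\mathcal B$ and $\|Q^nf-\nu(f)\mathbf 1\|\le C\kappa_0^n\|f\|$ for some $\kappa_0<1$, $C\ge0$, all $n\ge1$, $f\in\mathcal B$. Then $\check\xi=\sum_{n\ge0}Q^n\xi$, $\sigma^2=\nu(\check\xi^2)-\nu((Q\check\xi)^2)$, $\psi=Q(\check\xi^2)-(Q\check\xi)^2-\sigma^2\mathbf 1$. (H2) means $\sum_{p\ge0}\nu(|Q^p\psi|^{3/2})^{2/3}<\infty$. *)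

theory Defs
  imports "HOL-Probability.Probability" "HOL-Library.Function_Algebras"
begin

definition Qop :: "('e \<Rightarrow> 'e measure) \<Rightarrow> ('e \<Rightarrow> 'b::{banach,second_countable_topology}) \<Rightarrow> 'e \<Rightarrow> 'b" where
  "Qop Q f = (\<lambda>x. \<integral>y. f y \<partial>(Q x))"

definition transition_prob :: "'e measure \<Rightarrow> ('e \<Rightarrow> 'e measure) \<Rightarrow> bool" where
  "transition_prob E Q \<longleftrightarrow> Q \<in> measurable E (prob_algebra E)"

definition invariant_prob :: "'e measure \<Rightarrow> ('e \<Rightarrow> 'e measure) \<Rightarrow> 'e measure \<Rightarrow> bool" where
  "invariant_prob E Q \<nu> \<longleftrightarrow> prob_space \<nu> \<and> sets \<nu> = sets E \<and>
     (\<forall>A\<in>sets E. measure \<nu> A = (\<integral>x. measure (Q x) A \<partial>\<nu>))"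

definition markov_chain :: "'w measure \<Rightarrow> 'e measure \<Rightarrow> ('e \<Rightarrow> 'e measure) \<Rightarrow> (nat \<Rightarrow> 'w \<Rightarrow> 'e) \<Rightarrow> bool" where
  "markov_chain M E Q X \<longleftrightarrow> prob_space M \<and> (\<forall>n. X n \<in> measurable M E) \<and>
     (\<forall>n A. (\<forall>i\<le>Suc n. A i \<in> sets E) \<longrightarrow>
        measure M {\<omega>\<in>space M. \<forall>i\<le>Suc n. X i \<omega> \<in> A i}
        = (\<integral>\<omega>. indicator {\<omega>\<in>space M. \<forall>i\<le>n. X i \<omega> \<in> A i} \<omega> * measure (Q (X n \<omega>)) (A (Suc n)) \<partial>M))"

definition banach_fun_space :: "'e measure \<Rightarrow> ('e \<Rightarrow> complex) set \<Rightarrow> (('e \<Rightarrow> complex) \<Rightarrow> real) \<Rightarrow> bool" where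
  "banach_fun_space E B nB \<longleftrightarrow>
     B \<subseteq> borel_measurable E \<and> 0 \<in> B \<and>
     (\<forall>f\<in>B. \<forall>g\<in>B. f + g \<in> B) \<and> (\<forall>f\<in>B. \<forall>c::complex. (\<lambda>x. c * f x) \<in> B) \<and>
     (\<forall>f\<in>B. nB f \<ge> 0 \<and> (nB f = 0 \<longleftrightarrow> f = 0)) \<and>
     (\<forall>f\<in>B. \<forall>c::complex. nB (\<lambda>x. c * f x) = cmod c * nB f) \<and>
     (\<forall>f\<in>B. \<forall>g\<in>B. nB (f + g) \<le> nB f + nB g) \<and>
     (\<forall>s. (\<forall>n. s n \<in> B) \<longrightarrow> (\<forall>e>0. \<exists>N. \<forall>m\<ge>N. \<forall>n\<ge>N. nB (s m - s n) < e) \<longrightarrow>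
          (\<exists>g\<in>B. (\<lambda>n. nB (s n - g)) \<longlonglongrightarrow> 0))"

definition H1 :: "'e measure \<Rightarrow> 'e measure \<Rightarrow> ('e \<Rightarrow> 'e measure) \<Rightarrow> ('e \<Rightarrow> complex) set \<Rightarrow> (('e \<Rightarrow> complex) \<Rightarrow> real) \<Rightarrow> bool" where
  "H1 E \<nu> Q B nB \<longleftrightarrow>
     (\<lambda>_. 1) \<in> B \<and>
     (\<exists>c. \<forall>f\<in>B. integrable \<nu> f \<and> (\<integral>x. cmod (f x) \<partial>\<nu>) \<le> c * nB f) \<and>
     (\<forall>f\<in>B. Qop Q f \<in> B) \<and> (\<exists>K. \<forall>f\<in>B. nB (Qop Q f) \<le> K * nB f) \<and>
     (\<exists>C \<kappa>0. C \<ge> 0 \<and> \<kappa>0 < 1 \<and>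
        (\<forall>n\<ge>1. \<forall>f\<in>B. nB ((Qop Q ^^ n) f - (\<lambda>_. \<integral>x. f x \<partial>\<nu>)) \<le> C * \<kappa>0 ^ n * nB f))"

text \<open>xi-check = sum_{n>=0} Q^n xi, the series converging in B (real part taken; the limit
  is real nu-a.e.).\<close>
definition xi_check :: "('e \<Rightarrow> 'e measure) \<Rightarrow> ('e \<Rightarrow> complex) set \<Rightarrow> (('e \<Rightarrow> complex) \<Rightarrow> real) \<Rightarrow> ('e \<Rightarrow> real) \<Rightarrow> 'e \<Rightarrow> real" where
  "xi_check Q B nB \<xi> = (\<lambda>x. Re ((THE g. g \<in> B \<and>
      (\<lambda>N. nB ((\<Sum>n<N. (Qop Q ^^ n) (\<lambda>y. complex_of_real (\<xi> y))) - g)) \<longlonglongrightarrow> 0) x))"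

definition sigma2 :: "'e measure \<Rightarrow> ('e \<Rightarrow> 'e measure) \<Rightarrow> ('e \<Rightarrow> real) \<Rightarrow> real" where
  "sigma2 \<nu> Q xc = (\<integral>x. (xc x)\<^sup>2 \<partial>\<nu>) - (\<integral>x. (Qop Q xc x)\<^sup>2 \<partial>\<nu>)"

definition psi :: "'e measure \<Rightarrow> ('e \<Rightarrow> 'e measure) \<Rightarrow> ('e \<Rightarrow> real) \<Rightarrow> 'e \<Rightarrow> real" where
  "psi \<nu> Q xc = (\<lambda>x. Qop Q (\<lambda>y. (xc y)\<^sup>2) x - (Qop Q xc x)\<^sup>2 - sigma2 \<nu> Q xc)"

definition H2 :: "'e measure \<Rightarrow> ('e \<Rightarrow> 'e measure) \<Rightarrow> ('e \<Rightarrow> real) \<Rightarrow> bool" where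
  "H2 \<nu> Q xc \<longleftrightarrow>
     (\<forall>p. integrable \<nu> (\<lambda>x. \<bar>(Qop Q ^^ p) (psi \<nu> Q xc) x\<bar> powr (3/2))) \<and>
     summable (\<lambda>p. (\<integral>x. \<bar>(Qop Q ^^ p) (psi \<nu> Q xc) x\<bar> powr (3/2) \<partial>\<nu>) powr (2/3))"

end

theory Submission
  imports Defs
begin

(* Write xc for the solution of the Poisson equation (the Neumann series of Q applied to xi),
   U_k = xc(X_k) - Q xc(X_(k-1)) and T_k = U_1 + ... + U_k.  The proof is a one-step
   recursion for the characteristic functions phi_k(s) = E cis(s T_k):
     (1) by the Markov property, phi_(k+1)(s) = E[cis(s T_k) Phi_s(X_k)], where Phi_s(x) is
         the characteristic function of xc - Q xc(x) under Q(x, .);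
     (2) a third-order Taylor expansion gives Phi_s = 1 - s^2/2 (sigma^2 + psi) + O(|s|^3 |xc|^3);
     (3) the term E[cis(s T_k) psi(X_k)] is O(|s|): moving it back along the chain, replacing
         Q^p psi(X_j) by Q^(p+1) psi(X_(j-1)) costs |s| times a Hoelder (3, 3/2) bound, and at
         time 0 the term vanishes because Q^k psi is centred; the costs are summable by (H2);
   hence |phi_(k+1) - (1 - s^2 sigma^2/2) phi_k| <= K |s|^3.  Iterating this perturbed geometric
   recursion and comparing (1 - t^2/(2n))^n with exp(-t^2/2) yields the theorem for
   s = t / (sigma sqrt n). *)

section \<open>Elementary inequalities\<close>

lemma geometric_tail_le:
  fixes r :: real
  assumes "0 \<le> r" "r < 1" "m \<le> n"
  shows "(\<Sum>k\<in>{m..<n}. r ^ k) \<le> r ^ m / (1 - r)"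
proof -
  have sp: "{..<n} = {..<m} \<union> {m..<n}" "{..<m} \<inter> {m..<n} = {}" using assms(3) by auto
  have "(\<Sum>k<n. r ^ k) = (\<Sum>k<m. r ^ k) + (\<Sum>k\<in>{m..<n}. r ^ k)"
    unfolding sp(1) by (rule sum.union_disjoint) (use sp(2) in auto)
  moreover have "(\<Sum>k<n. r ^ k) = (1 - r ^ n) / (1 - r)" "(\<Sum>k<m. r ^ k) = (1 - r ^ m) / (1 - r)"
    using sum_gp_strict[of r n] sum_gp_strict[of r m] assms by auto
  ultimately have "(\<Sum>k\<in>{m..<n}. r ^ k) = (r ^ m - r ^ n) / (1 - r)"
    using assms by (simp add: diff_divide_distrib)
  also have "\<dots> \<le> r ^ m / (1 - r)" using assms by (intro divide_right_mono) auto
  finally show ?thesis .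
qed

lemma geometric_sum_le:
  fixes r :: real
  assumes "0 \<le> r" "r < 1"
  shows "(\<Sum>j<n. r ^ j) \<le> 1 / (1 - r)"
  using geometric_tail_le[OF assms, of 0 n] by (simp add: atLeast0LessThan)

lemma pow_diff_le:
  fixes l m :: real
  assumes "0 \<le> l" "l \<le> m" "m \<le> 1"
  shows "0 \<le> m ^ n - l ^ n \<and> m ^ n - l ^ n \<le> (m - l) * (\<Sum>j<n. m ^ j)"
proof (induction n)
  case 0 then show ?case by simp
next
  case (Suc n)
  have m1: "l ^ Suc n \<le> m ^ Suc n" by (rule power_mono) (use assms in auto)
  have "m ^ Suc n - l ^ Suc n = (m - l) * m ^ n + l * (m ^ n - l ^ n)" by (simp add: algebra_simps)
  also have "l * (m ^ n - l ^ n) \<le> 1 * (m ^ n - l ^ n)"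
    by (rule mult_right_mono) (use assms Suc.IH in auto)
  also have "(m - l) * m ^ n + 1 * (m ^ n - l ^ n) \<le> (m - l) * m ^ n + (m - l) * (\<Sum>j<n. m ^ j)"
    using Suc.IH by simp
  also have "\<dots> = (m - l) * (\<Sum>j<Suc n. m ^ j)" by (simp add: algebra_simps)
  finally show ?case using m1 by simp
qed

lemma exp_minus_bounds:
  fixes y :: real
  assumes "0 \<le> y" "y \<le> 1/2"
  shows "1 - y \<le> exp (- y)" "exp (- y) - (1 - y) \<le> y ^ 2" "2 * y / 3 \<le> 1 - exp (- y)"
proof -
  show "1 - y \<le> exp (- y)" using exp_ge_add_one_self[of "- y"] by simp
  have ey: "1 + y \<le> exp y" by simp
  have le: "exp (- y) \<le> 1 / (1 + y)"
  proof -
    have "exp (- y) = 1 / exp y" by (simp add: exp_minus')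
    also have "\<dots> \<le> 1 / (1 + y)" using assms ey by (intro divide_left_mono) auto
    finally show ?thesis .
  qed
  have "1 / (1 + y) - (1 - y) = y ^ 2 / (1 + y)" using assms by (simp add: field_simps power2_eq_square)
  also have "\<dots> \<le> y ^ 2" using assms by (simp add: divide_le_eq mult_le_cancel_left1 power2_eq_square)
  finally show "exp (- y) - (1 - y) \<le> y ^ 2" using le by simp
  have "2 * y / 3 \<le> y / (1 + y)"
  proof -
    have "y * (y * 2) \<le> y * 1" using assms by (intro mult_left_mono) auto
    then show ?thesis using assms by (simp add: field_simps)
  qed
  also have "y / (1 + y) = 1 - 1 / (1 + y)" using assms by (simp add: field_simps)
  also have "\<dots> \<le> 1 - exp (- y)" using le by simp
  finally show "2 * y / 3 \<le> 1 - exp (- y)" .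
qed

lemma exp_power_approx:
  fixes y :: real
  assumes y0: "0 < y" and y1: "y \<le> 1/2"
  shows "0 \<le> exp (- y) ^ n - (1 - y) ^ n \<and> exp (- y) ^ n - (1 - y) ^ n \<le> 3 * y / 2"
proof -
  define \<mu> where "\<mu> = exp (- y)"
  note EB = exp_minus_bounds[OF less_imp_le[OF y0] y1]
  have mu1: "\<mu> < 1" unfolding \<mu>_def using y0 by simp
  have pd: "0 \<le> \<mu> ^ n - (1 - y) ^ n \<and> \<mu> ^ n - (1 - y) ^ n \<le> (\<mu> - (1 - y)) * (\<Sum>j<n. \<mu> ^ j)"
    by (rule pow_diff_le) (use y1 EB mu1 in \<open>auto simp: \<mu>_def\<close>)
  have "(\<mu> - (1 - y)) * (\<Sum>j<n. \<mu> ^ j) \<le> y^2 * (1 / (1 - \<mu>))"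
    by (intro mult_mono geometric_sum_le) (use EB mu1 in \<open>auto simp: \<mu>_def intro: sum_nonneg\<close>)
  also have "\<dots> \<le> y^2 * (3 / (2 * y))"
  proof (intro mult_left_mono)
    show "1 / (1 - \<mu>) \<le> 3 / (2 * y)" using EB(3) y0 unfolding \<mu>_def by (simp add: field_simps)
  qed simp
  also have "\<dots> = 3 * y / 2" using y0 by (simp add: field_simps power2_eq_square)
  finally show ?thesis using pd unfolding \<mu>_def by linarith
qed

lemma perturbed_geometric:
  fixes a :: "nat \<Rightarrow> complex" and l \<epsilon> :: real
  assumes a0: "a 0 = 1" and l: "0 \<le> l"
    and step: "\<And>k. cmod (a (Suc k) - complex_of_real l * a k) \<le> \<epsilon>"
  shows "cmod (a n - complex_of_real (l ^ n)) \<le> \<epsilon> * (\<Sum>j<n. l ^ j)"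
proof (induction n)
  case 0 then show ?case using a0 by simp
next
  case (Suc n)
  have eq: "a (Suc n) - complex_of_real (l ^ Suc n)
      = (a (Suc n) - complex_of_real l * a n) + complex_of_real l * (a n - complex_of_real (l ^ n))"
    by (simp add: algebra_simps)
  have "cmod (a (Suc n) - complex_of_real (l ^ Suc n))
      \<le> cmod (a (Suc n) - complex_of_real l * a n) + l * cmod (a n - complex_of_real (l ^ n))"
    unfolding eq using l by (metis norm_mult norm_of_real abs_of_nonneg norm_triangle_ineq)
  also have "\<dots> \<le> \<epsilon> + l * (\<epsilon> * (\<Sum>j<n. l ^ j))"
    using step Suc.IH l by (intro add_mono mult_left_mono) auto
  also have "\<dots> = \<epsilon> * (\<Sum>j<Suc n. l ^ j)"
    by (simp only: sum.lessThan_Suc_shift) (simp add: sum_distrib_left algebra_simps)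
  finally show ?case .
qed

lemma abs_le_cube: "\<bar>x::real\<bar> \<le> 1 + \<bar>x\<bar> ^ 3"
proof (cases "\<bar>x\<bar> \<le> 1")
  case False
  then have "1 \<le> \<bar>x\<bar>^2" by (intro one_le_power) auto
  then have "\<bar>x\<bar> * 1 \<le> \<bar>x\<bar> * \<bar>x\<bar>^2" by (intro mult_left_mono) auto
  then show ?thesis by (simp add: power3_eq_cube power2_eq_square)
next
  case True
  have "0 \<le> \<bar>x\<bar> ^ 3" by simp
  then show ?thesis using True by linarith
qed

lemma square_le_cube: "(x::real) ^ 2 \<le> 1 + \<bar>x\<bar> ^ 3"
proof (cases "\<bar>x\<bar> \<le> 1")
  case True
  then have "x^2 \<le> 1" by (simp add: abs_square_le_1)
  then show ?thesis by (smt (verit) zero_le_power abs_ge_zero)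
next
  case False
  then have "\<bar>x\<bar>^2 * 1 \<le> \<bar>x\<bar>^2 * \<bar>x\<bar>" by (intro mult_left_mono) auto
  then show ?thesis by (simp add: power3_eq_cube power2_eq_square)
qed

lemma abs_le_powr_3_2: "\<bar>x::real\<bar> \<le> 1 + \<bar>x\<bar> powr (3/2)"
proof (cases "\<bar>x\<bar> \<le> 1")
  case False
  then have "\<bar>x\<bar> powr 1 \<le> \<bar>x\<bar> powr (3/2)" by (intro powr_mono) auto
  then show ?thesis by simp
qed (smt (verit) powr_ge_zero)

lemma cube_diff_le: "\<bar>a - c\<bar> ^ 3 \<le> 4 * (\<bar>a\<bar> ^ 3 + \<bar>c::real\<bar> ^ 3)"
proof -
  have "\<bar>a - c\<bar> ^ 3 \<le> (\<bar>a\<bar> + \<bar>c\<bar>) ^ 3" by (rule power_mono) auto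
  also have "\<dots> \<le> 4 * (\<bar>a\<bar> ^ 3 + \<bar>c\<bar> ^ 3)"
  proof -
    define p where "p = \<bar>a\<bar>"
    define q where "q = \<bar>c\<bar>"
    have "0 \<le> (p + q) * (p - q)^2" by (simp add: p_def q_def)
    then have "(p + q) ^ 3 \<le> 4 * (p ^ 3 + q ^ 3)"
      by (simp add: power2_eq_square power3_eq_cube algebra_simps)
    then show ?thesis by (simp add: p_def q_def)
  qed
  finally show ?thesis .
qed

lemma young_3_3_2:
  fixes a b :: real
  assumes "0 \<le> a" "0 \<le> b"
  shows "a * b \<le> a ^ 3 / 3 + 2 / 3 * b powr (3/2)"
proof -
  have "a * b \<le> a powr 3 / 3 + b powr (3/2) / (3/2)"
    by (rule Youngs_inequality) (use assms in auto)
  moreover have "a powr 3 = a ^ 3" using powr_realpow'[of a 3] assms by simp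
  ultimately show ?thesis by simp
qed

lemma cis_approx1: "cmod (cis u - 1) \<le> \<bar>u\<bar>"
proof -
  have "cmod (iexp u - (\<Sum>k \<le> 0. (\<i> * u)^k / fact k)) \<le> \<bar>u\<bar>^(Suc 0) / fact (Suc 0)"
    by (rule iexp_approx1)
  then show ?thesis by (simp add: cis_conv_exp)
qed

lemma cis_approx3:
  "cmod (cis u - (1 + \<i> * complex_of_real u - complex_of_real (u^2 / 2))) \<le> \<bar>u\<bar>^3 / 6"
proof -
  have "cmod (iexp u - (\<Sum>k \<le> 2. (\<i> * u)^k / fact k)) \<le> \<bar>u\<bar>^(Suc 2) / fact (Suc 2)"
    by (rule iexp_approx1)
  moreover have "(\<Sum>k \<le> 2. (\<i> * complex_of_real u)^k / fact k)
      = 1 + \<i> * complex_of_real u - complex_of_real (u^2 / 2)"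
    by (simp add: numeral_2_eq_2 power2_eq_square field_simps)
  moreover have "fact (Suc 2) = (6::real)" by (simp add: numeral_3_eq_3 numeral_2_eq_2)
  ultimately show ?thesis by (simp add: cis_conv_exp numeral_3_eq_3[symmetric])
qed

section \<open>Integration lemmas\<close>

lemma nn_integral_bind_finite:
  fixes h :: "'e \<Rightarrow> real"
  assumes K[measurable]: "K \<in> N \<rightarrow>\<^sub>M subprob_algebra E" and h[measurable]: "h \<in> borel_measurable E"
    and fin: "(\<integral>\<^sup>+x. ennreal (h x) \<partial>(N \<bind> K)) \<noteq> \<infinity>"
  shows "AE x in N. (\<integral>\<^sup>+y. ennreal (h y) \<partial>K x) \<noteq> \<infinity>"
    and "integrable N (\<lambda>x. enn2real (\<integral>\<^sup>+y. ennreal (h y) \<partial>K x))"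
    and "(\<integral>x. enn2real (\<integral>\<^sup>+y. ennreal (h y) \<partial>K x) \<partial>N) = enn2real (\<integral>\<^sup>+x. ennreal (h x) \<partial>(N \<bind> K))"
proof -
  define P where "P x = (\<integral>\<^sup>+y. ennreal (h y) \<partial>K x)" for x
  have Pm[measurable]: "P \<in> borel_measurable N" unfolding P_def
    by (rule nn_integral_measurable_subprob_algebra2[where N=E]) auto
  have bind: "(\<integral>\<^sup>+ x. ennreal (h x) \<partial>(N \<bind> K)) = (\<integral>\<^sup>+x. P x \<partial>N)"
    unfolding P_def by (rule nn_integral_bind[OF _ K]) measurable
  show aP: "AE x in N. P x \<noteq> \<infinity>" using fin bind by (intro nn_integral_PInf_AE) auto
  show "integrable N (\<lambda>x. enn2real (P x))"
  proof (rule integrableI_nonneg)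
    have "(\<integral>\<^sup>+x. ennreal (enn2real (P x)) \<partial>N) \<le> (\<integral>\<^sup>+x. P x \<partial>N)"
      by (intro nn_integral_mono) (simp add: ennreal_enn2real_if)
    also have "\<dots> < \<infinity>" using fin bind by (simp add: less_top[symmetric])
    finally show "(\<integral>\<^sup>+x. ennreal (enn2real (P x)) \<partial>N) < \<infinity>" .
  qed auto
  have "(\<integral>x. enn2real (P x) \<partial>N) = enn2real (\<integral>\<^sup>+x. P x \<partial>N)"
    using aP by (subst integral_eq_nn_integral)
      (auto intro!: arg_cong[where f=enn2real] nn_integral_cong_AE simp: ennreal_enn2real_if)
  then show "(\<integral>x. enn2real (P x) \<partial>N) = enn2real (\<integral>\<^sup>+x. ennreal (h x) \<partial>(N \<bind> K))"
    unfolding bind .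
qed

text \<open>Fubini's theorem for a probability kernel and an integrable real function.  (The library
  version integral_bind requires boundedness.)\<close>

lemma integral_bind_real:
  fixes g :: "'e \<Rightarrow> real"
  assumes K: "K \<in> N \<rightarrow>\<^sub>M prob_algebra E" and g[measurable]: "g \<in> borel_measurable E"
    and int: "integrable (N \<bind> K) g" and ne: "space N \<noteq> {}"
  shows "integrable N (\<lambda>x. \<integral>y. g y \<partial>K x)"
    and "(\<integral>x. g x \<partial>(N \<bind> K)) = (\<integral>x. (\<integral>y. g y \<partial>K x) \<partial>N)"
    and "AE x in N. integrable (K x) g"
proof -
  have K'[measurable]: "K \<in> N \<rightarrow>\<^sub>M subprob_algebra E" using K by (rule measurable_prob_algebraD)
  have Kx: "x \<in> space N \<Longrightarrow> sets (K x) = sets E" for x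
    using measurable_space[OF K] by (auto simp: space_prob_algebra)
  define P where "P x = (\<integral>\<^sup>+y. ennreal (g y) \<partial>K x)" for x
  define Nn where "Nn x = (\<integral>\<^sup>+y. ennreal (- g y) \<partial>K x)" for x
  have Pm[measurable]: "P \<in> borel_measurable N" and Nm[measurable]: "Nn \<in> borel_measurable N"
    unfolding P_def Nn_def by (auto intro!: nn_integral_measurable_subprob_algebra2[where N=E])
  from int have i1: "(\<integral>\<^sup>+ x. ennreal (g x) \<partial>(N \<bind> K)) \<noteq> \<infinity>"
    and i2: "(\<integral>\<^sup>+ x. ennreal (- g x) \<partial>(N \<bind> K)) \<noteq> \<infinity>"
    unfolding real_integrable_def by auto
  note pos = nn_integral_bind_finite[OF K' g i1, folded P_def]
  have mg: "(\<lambda>x. - g x) \<in> borel_measurable E" by measurable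
  note neg = nn_integral_bind_finite[OF K' mg i2, folded Nn_def]
  have ae: "AE x in N. integrable (K x) g \<and> (\<integral>y. g y \<partial>K x) = enn2real (P x) - enn2real (Nn x)"
    using pos(1) neg(1) AE_space
  proof eventually_elim
    case (elim x)
    then have "g \<in> borel_measurable (K x)" using Kx by (simp cong: measurable_cong_sets)
    then have "integrable (K x) g" using elim unfolding real_integrable_def P_def Nn_def by auto
    then show ?case unfolding P_def Nn_def using real_lebesgue_integral_def by blast
  qed
  then show "AE x in N. integrable (K x) g" by auto
  have Im[measurable]: "(\<lambda>x. \<integral>y. g y \<partial>K x) \<in> borel_measurable N"
    using measurable_compose[OF K' integral_measurable_subprob_algebra[OF g]] by simp
  have iD: "integrable N (\<lambda>x. enn2real (P x) - enn2real (Nn x))" using pos(2) neg(2) by auto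
  show "integrable N (\<lambda>x. \<integral>y. g y \<partial>K x)"
    by (rule integrable_cong_AE_imp[OF iD Im]) (use ae in auto)
  have "(\<integral>x. (\<integral>y. g y \<partial>K x) \<partial>N) = (\<integral>x. enn2real (P x) - enn2real (Nn x) \<partial>N)"
    by (rule integral_cong_AE[OF Im]) (use ae in auto)
  also have "\<dots> = (\<integral>x. enn2real (P x) \<partial>N) - (\<integral>x. enn2real (Nn x) \<partial>N)"
    using pos(2) neg(2) by simp
  finally show "(\<integral>x. g x \<partial>(N \<bind> K)) = (\<integral>x. (\<integral>y. g y \<partial>K x) \<partial>N)"
    using real_lebesgue_integral_def[OF int] pos(3) neg(3) by simp
qed

lemma integral_bind:
  fixes g :: "'e \<Rightarrow> complex"
  assumes K: "K \<in> N \<rightarrow>\<^sub>M prob_algebra E" and g[measurable]: "g \<in> borel_measurable E"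
    and int: "integrable (N \<bind> K) g" and ne: "space N \<noteq> {}"
  shows "integrable N (\<lambda>x. \<integral>y. g y \<partial>K x)"
    and "(\<integral>x. g x \<partial>(N \<bind> K)) = (\<integral>x. (\<integral>y. g y \<partial>K x) \<partial>N)"
proof -
  have K'[measurable]: "K \<in> N \<rightarrow>\<^sub>M subprob_algebra E" using K by (rule measurable_prob_algebraD)
  have parts: "h = (\<lambda>x. complex_of_real (Re (h x)) + \<i> * complex_of_real (Im (h x)))"
    for h :: "'b \<Rightarrow> complex" by (rule ext) (simp add: complex_eq_iff)
  have iR: "integrable (N \<bind> K) (\<lambda>x. Re (g x))" and iI: "integrable (N \<bind> K) (\<lambda>x. Im (g x))"
    using int by auto
  have mR: "(\<lambda>x. Re (g x)) \<in> borel_measurable E" and mI: "(\<lambda>x. Im (g x)) \<in> borel_measurable E"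
    by measurable
  note R = integral_bind_real[OF K mR iR ne] and I = integral_bind_real[OF K mI iI ne]
  have aei: "AE x in N. integrable (K x) g"
    using R(3) I(3)
  proof eventually_elim
    case (elim x)
    then have "integrable (K x) (\<lambda>y. complex_of_real (Re (g y)) + \<i> * complex_of_real (Im (g y)))"
      by auto
    then show ?case by (rule ssubst[OF parts[of g]])
  qed
  have ae: "AE x in N. (\<integral>y. g y \<partial>K x)
      = complex_of_real (\<integral>y. Re (g y) \<partial>K x) + \<i> * complex_of_real (\<integral>y. Im (g y) \<partial>K x)"
    using aei by eventually_elim (simp add: complex_eq_iff)
  have Im[measurable]: "(\<lambda>x. \<integral>y. g y \<partial>K x) \<in> borel_measurable N"
    using measurable_compose[OF K' integral_measurable_subprob_algebra[OF g]] by simp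
  have iD: "integrable N (\<lambda>x. complex_of_real (\<integral>y. Re (g y) \<partial>K x) + \<i> * complex_of_real (\<integral>y. Im (g y) \<partial>K x))"
    using R(1) I(1) int by auto
  show "integrable N (\<lambda>x. \<integral>y. g y \<partial>K x)"
    by (rule integrable_cong_AE_imp[OF iD Im]) (use ae in auto)
  have "(\<integral>x. (\<integral>y. g y \<partial>K x) \<partial>N)
      = (\<integral>x. complex_of_real (\<integral>y. Re (g y) \<partial>K x) + \<i> * complex_of_real (\<integral>y. Im (g y) \<partial>K x) \<partial>N)"
    by (rule integral_cong_AE[OF Im]) (use ae in auto)
  also have "\<dots> = complex_of_real (\<integral>x. Re (g x) \<partial>(N \<bind> K)) + \<i> * complex_of_real (\<integral>x. Im (g x) \<partial>(N \<bind> K))"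
    using R(1,2) I(1,2) int by simp
  also have "\<dots> = (\<integral>x. g x \<partial>(N \<bind> K))" using int by (simp add: complex_eq_iff)
  finally show "(\<integral>x. g x \<partial>(N \<bind> K)) = (\<integral>x. (\<integral>y. g y \<partial>K x) \<partial>N)" by simp
qed

lemma holder_3_3_2_normalised:
  fixes A B :: "'a \<Rightarrow> real"
  assumes iAB: "integrable N (\<lambda>x. A x * B x)"
    and An: "\<And>x. 0 \<le> A x" and Bn: "\<And>x. 0 \<le> B x"
    and iA: "integrable N (\<lambda>x. A x ^ 3)" and iB: "integrable N (\<lambda>x. B x powr (3/2))"
    and a: "0 < (\<integral>x. A x ^ 3 \<partial>N)" and b: "0 < (\<integral>x. B x powr (3/2) \<partial>N)"
  shows "(\<integral>x. A x * B x \<partial>N) \<le> (\<integral>x. A x ^ 3 \<partial>N) powr (1/3) * (\<integral>x. B x powr (3/2) \<partial>N) powr (2/3)"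
proof -
  define \<alpha> where "\<alpha> = (\<integral>x. A x ^ 3 \<partial>N)"
  define \<beta> where "\<beta> = (\<integral>x. B x powr (3/2) \<partial>N)"
  define u where "u = \<alpha> powr (1/3)"
  define v where "v = \<beta> powr (2/3)"
  have ap: "0 < \<alpha>" and bp: "0 < \<beta>" using a b unfolding \<alpha>_def \<beta>_def .
  have up: "0 < u" and vp: "0 < v" using ap bp by (auto simp: u_def v_def)
  have u3: "u ^ 3 = \<alpha>"
  proof -
    have "u ^ 3 = u powr (real 3)" using powr_realpow[OF up, of 3] by simp
    also have "\<dots> = \<alpha>" unfolding u_def using ap by (simp add: powr_powr)
    finally show ?thesis .
  qed
  have v32: "v powr (3/2) = \<beta>" unfolding v_def using bp by (simp add: powr_powr)
  have pt: "A x * B x \<le> u * v * (A x ^ 3 / (3 * \<alpha>) + 2 / 3 * (B x powr (3/2) / \<beta>))" for x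
  proof -
    have "(A x / u) * (B x / v) \<le> (A x / u) ^ 3 / 3 + 2 / 3 * (B x / v) powr (3/2)"
      by (rule young_3_3_2) (use An Bn up vp in auto)
    also have "(A x / u) ^ 3 = A x ^ 3 / \<alpha>" by (simp add: power_divide u3)
    also have "(B x / v) powr (3/2) = B x powr (3/2) / \<beta>"
      by (simp add: powr_divide v32 Bn vp less_imp_le)
    finally have "(A x / u) * (B x / v) \<le> A x ^ 3 / \<alpha> / 3 + 2 / 3 * (B x powr (3/2) / \<beta>)" .
    then have "u * v * ((A x / u) * (B x / v)) \<le> u * v * (A x ^ 3 / \<alpha> / 3 + 2 / 3 * (B x powr (3/2) / \<beta>))"
      using up vp by (intro mult_left_mono) auto
    then show ?thesis using up vp by (simp add: field_simps)
  qed
  have "(\<integral>x. A x * B x \<partial>N) \<le> (\<integral>x. u * v * (A x ^ 3 / (3 * \<alpha>) + 2 / 3 * (B x powr (3/2) / \<beta>)) \<partial>N)"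
    by (rule integral_mono[OF iAB]) (use iA iB pt in auto)
  also have "\<dots> = u * v * (\<alpha> / (3 * \<alpha>) + 2 / 3 * (\<beta> / \<beta>))"
    using iA iB by (simp add: \<alpha>_def \<beta>_def)
  also have "\<dots> = u * v" using ap bp by simp
  finally show ?thesis unfolding u_def v_def \<alpha>_def \<beta>_def .
qed

lemma holder_3_3_2:
  fixes A B :: "'a \<Rightarrow> real"
  assumes Am[measurable]: "A \<in> borel_measurable N" and Bm[measurable]: "B \<in> borel_measurable N"
    and An: "\<And>x. 0 \<le> A x" and Bn: "\<And>x. 0 \<le> B x"
    and iA: "integrable N (\<lambda>x. A x ^ 3)" and iB: "integrable N (\<lambda>x. B x powr (3/2))"
  shows "integrable N (\<lambda>x. A x * B x)"
    and "(\<integral>x. A x * B x \<partial>N) \<le> (\<integral>x. A x ^ 3 \<partial>N) powr (1/3) * (\<integral>x. B x powr (3/2) \<partial>N) powr (2/3)"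
proof -
  show iAB: "integrable N (\<lambda>x. A x * B x)"
  proof (rule Bochner_Integration.integrable_bound[where f="\<lambda>x. A x ^ 3 / 3 + 2 / 3 * B x powr (3/2)"])
    show "integrable N (\<lambda>x. A x ^ 3 / 3 + 2 / 3 * B x powr (3/2))" using iA iB by auto
    show "AE x in N. norm (A x * B x) \<le> norm (A x ^ 3 / 3 + 2 / 3 * B x powr (3/2))"
      using young_3_3_2[OF An Bn] An Bn by (intro AE_I2) (auto simp: abs_mult)
  qed measurable
  have a0: "0 \<le> (\<integral>x. A x ^ 3 \<partial>N)" using An by (intro integral_nonneg_AE) auto
  have b0: "0 \<le> (\<integral>x. B x powr (3/2) \<partial>N)" by (intro integral_nonneg_AE) auto
  show "(\<integral>x. A x * B x \<partial>N) \<le> (\<integral>x. A x ^ 3 \<partial>N) powr (1/3) * (\<integral>x. B x powr (3/2) \<partial>N) powr (2/3)"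
  proof (cases "(\<integral>x. A x ^ 3 \<partial>N) = 0 \<or> (\<integral>x. B x powr (3/2) \<partial>N) = 0")
    case True
    then have "AE x in N. A x ^ 3 = 0 \<or> B x powr (3/2) = 0"
      using iA iB An by (auto simp: integral_nonneg_eq_0_iff_AE elim: eventually_mono)
    then have "AE x in N. A x * B x = 0" by eventually_elim auto
    then have "(\<integral>x. A x * B x \<partial>N) = 0" by (subst integral_cong_AE[where g="\<lambda>_. 0"]) auto
    then show ?thesis by simp
  next
    case False
    have "0 < (\<integral>x. A x ^ 3 \<partial>N)" "0 < (\<integral>x. B x powr (3/2) \<partial>N)"
      using a0 b0 False by linarith+
    then show ?thesis by (rule holder_3_3_2_normalised[OF iAB An Bn iA iB])
  qed
qed

text \<open>Jensen's inequality for the cube, as the special case B = 1.\<close>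

lemma jensen_cube:
  fixes f :: "'a \<Rightarrow> real"
  assumes P: "prob_space P" and fm[measurable]: "f \<in> borel_measurable P"
    and i: "integrable P (\<lambda>x. \<bar>f x\<bar> ^ 3)"
  shows "\<bar>\<integral>x. f x \<partial>P\<bar> ^ 3 \<le> (\<integral>x. \<bar>f x\<bar> ^ 3 \<partial>P)"
proof -
  interpret prob_space P by (rule P)
  define m3 where "m3 = (\<integral>x. \<bar>f x\<bar> ^ 3 \<partial>P)"
  have "\<bar>\<integral>x. f x \<partial>P\<bar> \<le> (\<integral>x. \<bar>f x\<bar> \<partial>P)" by (rule integral_abs_bound)
  also have "\<dots> \<le> m3 powr (1/3)"
    using holder_3_3_2(2)[of "\<lambda>x. \<bar>f x\<bar>" P "\<lambda>_. 1"] i by (auto simp: prob_space m3_def)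
  finally have le: "\<bar>\<integral>x. f x \<partial>P\<bar> ^ 3 \<le> (m3 powr (1/3)) ^ 3" by (rule power_mono) simp
  have "0 \<le> m3" unfolding m3_def by (intro integral_nonneg_AE) auto
  then have "(m3 powr (1/3)) ^ 3 = m3"
    by (cases "m3 = 0") (simp_all add: powr_realpow[symmetric] powr_powr)
  then show ?thesis using le unfolding m3_def by simp
qed

lemma cis_measurable[measurable]:
  assumes [measurable]: "f \<in> borel_measurable N"
  shows "(\<lambda>x. cis (f x)) \<in> borel_measurable N"
proof -
  have "(\<lambda>x. cis (f x)) = (\<lambda>x. complex_of_real (cos (f x)) + \<i> * complex_of_real (sin (f x)))"
    by (rule ext) (simp add: complex_eq_iff)
  also have "\<dots> \<in> borel_measurable N" by measurable
  finally show ?thesis .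
qed

lemma integrable_bounded_mult:
  fixes G h :: "'a \<Rightarrow> complex"
  assumes "integrable N h" "G \<in> borel_measurable N" "\<And>\<omega>. cmod (G \<omega>) \<le> 1"
  shows "integrable N (\<lambda>\<omega>. G \<omega> * h \<omega>)"
proof (rule Bochner_Integration.integrable_bound[OF assms(1)])
  show "(\<lambda>\<omega>. G \<omega> * h \<omega>) \<in> borel_measurable N" using assms by measurable
  show "AE x in N. norm (G x * h x) \<le> norm (h x)"
    using assms(3) by (intro AE_I2) (auto simp: norm_mult intro: mult_left_le_one_le)
qed

lemma charfun_taylor3:
  fixes f :: "'a \<Rightarrow> real"
  assumes P: "prob_space P" and fm[measurable]: "f \<in> borel_measurable P"
    and i3: "integrable P (\<lambda>y. \<bar>f y\<bar> ^ 3)"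
    and i1: "integrable P f" and i2: "integrable P (\<lambda>y. (f y)\<^sup>2)"
    and c: "c = (\<integral>y. f y \<partial>P)"
  shows "cmod ((\<integral>y. cis (s * (f y - c)) \<partial>P) - (1 - complex_of_real (s^2 / 2 * ((\<integral>y. (f y)\<^sup>2 \<partial>P) - c^2))))
     \<le> 2 / 3 * \<bar>s\<bar> ^ 3 * ((\<integral>y. \<bar>f y\<bar> ^ 3 \<partial>P) + \<bar>c\<bar> ^ 3)"
proof -
  interpret prob_space P by (rule P)
  define u where "u y = s * (f y - c)" for y
  define T where "T y = 1 + \<i> * complex_of_real (u y) - complex_of_real ((u y)^2 / 2)" for y
  have u2: "(\<lambda>y. (u y)^2 / 2) = (\<lambda>y. s^2 / 2 * (f y)^2 - s^2 * c * f y + s^2 * c^2 / 2)"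
    unfolding u_def by (rule ext) (simp add: power2_eq_square field_simps)
  have iu: "integrable P u" unfolding u_def using i1 by simp
  have iu2: "integrable P (\<lambda>y. (u y)^2 / 2)" unfolding u2 using i1 i2 by simp
  have iT: "integrable P T" unfolding T_def
    by (intro Bochner_Integration.integrable_diff Bochner_Integration.integrable_add
        integrable_mult_right integrable_of_real iu iu2 integrable_const)
  have icis: "integrable P (\<lambda>y. cis (u y))"
    by (rule integrable_const_bound[where B=1]) (auto simp: u_def)
  have intT: "(\<integral>y. T y \<partial>P) = 1 - complex_of_real (s^2 / 2 * ((\<integral>y. (f y)\<^sup>2 \<partial>P) - c^2))"
  proof -
    have "(\<integral>y. T y \<partial>P)
        = (\<integral>y. 1 + \<i> * complex_of_real (u y) \<partial>P) - (\<integral>y. complex_of_real ((u y)^2 / 2) \<partial>P)"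
      unfolding T_def using iu iu2 by (intro Bochner_Integration.integral_diff
          Bochner_Integration.integrable_add integrable_mult_right integrable_of_real integrable_const) auto
    also have "(\<integral>y. 1 + \<i> * complex_of_real (u y) \<partial>P) = (\<integral>y. 1 \<partial>P) + (\<integral>y. \<i> * complex_of_real (u y) \<partial>P)"
      using iu by (intro Bochner_Integration.integral_add integrable_mult_right integrable_of_real integrable_const) auto
    finally have "(\<integral>y. T y \<partial>P) = 1 + \<i> * complex_of_real (\<integral>y. u y \<partial>P) - complex_of_real (\<integral>y. (u y)^2 / 2 \<partial>P)"
      by (simp add: prob_space del: of_real_power of_real_divide)
    also have "(\<integral>y. u y \<partial>P) = 0" unfolding u_def using i1 by (simp add: c prob_space)
    also have "(\<integral>y. (u y)^2 / 2 \<partial>P) = s^2 / 2 * ((\<integral>y. (f y)\<^sup>2 \<partial>P) - c^2)"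
      unfolding u2 using i1 i2 by (simp add: c prob_space power2_eq_square algebra_simps)
    finally show ?thesis by simp
  qed
  have Rb: "cmod (cis (u y) - T y) \<le> \<bar>s\<bar>^3 / 6 * (4 * (\<bar>f y\<bar> ^ 3 + \<bar>c\<bar> ^ 3))" for y
  proof -
    have "cmod (cis (u y) - T y) \<le> \<bar>u y\<bar>^3 / 6" unfolding T_def by (rule cis_approx3)
    also have "\<bar>u y\<bar>^3 = \<bar>s\<bar>^3 * \<bar>f y - c\<bar>^3" unfolding u_def by (simp add: abs_mult power_mult_distrib)
    also have "\<bar>s\<bar>^3 * \<bar>f y - c\<bar>^3 \<le> \<bar>s\<bar>^3 * (4 * (\<bar>f y\<bar> ^ 3 + \<bar>c\<bar> ^ 3))"
      by (intro mult_left_mono cube_diff_le) simp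
    finally show ?thesis by simp
  qed
  have "cmod ((\<integral>y. cis (u y) \<partial>P) - (\<integral>y. T y \<partial>P)) \<le> (\<integral>y. cmod (cis (u y) - T y) \<partial>P)"
    using icis iT by (simp flip: Bochner_Integration.integral_diff)
  also have "\<dots> \<le> (\<integral>y. \<bar>s\<bar>^3 / 6 * (4 * (\<bar>f y\<bar> ^ 3 + \<bar>c\<bar> ^ 3)) \<partial>P)"
    by (rule integral_mono[OF _ _ Rb]) (use icis iT i3 in auto)
  also have "\<dots> = 2 / 3 * \<bar>s\<bar> ^ 3 * ((\<integral>y. \<bar>f y\<bar> ^ 3 \<partial>P) + \<bar>c\<bar> ^ 3)"
    using i3 by (simp add: prob_space algebra_simps)
  finally show ?thesis unfolding intT u_def .
qed

section \<open>The Neumann series in a Banach function space\<close>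

locale function_banach_space =
  fixes E :: "'e measure" and B :: "('e \<Rightarrow> complex) set" and nB :: "('e \<Rightarrow> complex) \<Rightarrow> real"
  assumes banach: "banach_fun_space E B nB"
begin

lemma B_measurable: "B \<subseteq> borel_measurable E"
  and B_zero: "0 \<in> B"
  and B_add: "f \<in> B \<Longrightarrow> g \<in> B \<Longrightarrow> f + g \<in> B"
  and B_scale: "f \<in> B \<Longrightarrow> (\<lambda>x. c * f x) \<in> B"
  and norm_nonneg: "f \<in> B \<Longrightarrow> 0 \<le> nB f"
  and norm_eq_zero: "f \<in> B \<Longrightarrow> nB f = 0 \<longleftrightarrow> f = 0"
  and norm_scale: "f \<in> B \<Longrightarrow> nB (\<lambda>x. c * f x) = cmod c * nB f"
  and norm_triangle: "f \<in> B \<Longrightarrow> g \<in> B \<Longrightarrow> nB (f + g) \<le> nB f + nB g"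
  and complete: "(\<And>n. s n \<in> B) \<Longrightarrow> (\<forall>e>0. \<exists>N. \<forall>m\<ge>N. \<forall>n\<ge>N. nB (s m - s n) < e) \<Longrightarrow>
          \<exists>g\<in>B. (\<lambda>n. nB (s n - g)) \<longlonglongrightarrow> 0"
  using banach unfolding banach_fun_space_def by simp_all

lemma B_diff: "f \<in> B \<Longrightarrow> g \<in> B \<Longrightarrow> f - g \<in> B"
  and norm_diff_commute: "f \<in> B \<Longrightarrow> g \<in> B \<Longrightarrow> nB (f - g) = nB (g - f)"
proof -
  have neg: "- h = (\<lambda>x. (-1) * h x)" for h :: "'e \<Rightarrow> complex" by (rule ext) simp
  assume f: "f \<in> B" and g: "g \<in> B"
  have "- g \<in> B" unfolding neg by (rule B_scale[OF g])
  then show fg: "f - g \<in> B" using B_add[OF f, of "- g"] by simp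
  have "nB (- (f - g)) = nB (f - g)" unfolding neg using norm_scale[OF fg, of "-1"] by simp
  then show "nB (f - g) = nB (g - f)" by simp
qed

lemma B_sum:
  "finite I \<Longrightarrow> (\<And>i. i \<in> I \<Longrightarrow> f i \<in> B) \<Longrightarrow> (\<Sum>i\<in>I. f i) \<in> B \<and> nB (\<Sum>i\<in>I. f i) \<le> (\<Sum>i\<in>I. nB (f i))"
proof (induction I rule: finite_induct)
  case empty
  have "nB 0 = 0" using norm_eq_zero[OF B_zero] by simp
  then show ?case using B_zero by (simp add: zero_fun_def)
next
  case (insert i I)
  then have fi: "f i \<in> B" and IH: "(\<Sum>i\<in>I. f i) \<in> B \<and> nB (\<Sum>i\<in>I. f i) \<le> (\<Sum>i\<in>I. nB (f i))" by auto
  have le: "nB (f i + (\<Sum>i\<in>I. f i)) \<le> nB (f i) + (\<Sum>i\<in>I. nB (f i))"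
    using norm_triangle[OF fi] IH by (meson add_left_mono order_trans)
  have eq1: "(\<Sum>i\<in>insert i I. f i) = f i + (\<Sum>i\<in>I. f i)"
    and eq2: "(\<Sum>i\<in>insert i I. nB (f i)) = nB (f i) + (\<Sum>i\<in>I. nB (f i))"
    by (simp_all only: sum.insert[OF insert(1,2)])
  show ?case unfolding eq1 eq2 using B_add[OF fi] IH le by blast
qed

lemma limit_unique:
  assumes s: "\<And>n. s n \<in> B" and g1: "g1 \<in> B" "(\<lambda>n. nB (s n - g1)) \<longlonglongrightarrow> 0"
    and g2: "g2 \<in> B" "(\<lambda>n. nB (s n - g2)) \<longlonglongrightarrow> 0"
  shows "g1 = g2"
proof -
  have le: "nB (g1 - g2) \<le> nB (s n - g1) + nB (s n - g2)" for n
  proof -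
    have "g1 - g2 = (g1 - s n) + (s n - g2)" by simp
    then have "nB (g1 - g2) \<le> nB (g1 - s n) + nB (s n - g2)"
      using norm_triangle[OF B_diff[OF g1(1) s[of n]] B_diff[OF s[of n] g2(1)]] by simp
    then show ?thesis using norm_diff_commute[OF g1(1) s[of n]] by simp
  qed
  have "(\<lambda>n. nB (s n - g1) + nB (s n - g2)) \<longlonglongrightarrow> 0 + 0" by (intro tendsto_add g1(2) g2(2))
  then have "nB (g1 - g2) \<le> 0" using le by (intro LIMSEQ_le_const) (auto intro: exI[of _ 0])
  then show ?thesis using norm_nonneg[OF B_diff[OF g1(1) g2(1)]] norm_eq_zero[OF B_diff[OF g1(1) g2(1)]] by simp
qed

lemma limit_in_B:
  assumes s: "\<And>n. s n \<in> B" and cauchy: "\<forall>e>0. \<exists>N. \<forall>m\<ge>N. \<forall>n\<ge>N. nB (s m - s n) < e"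
  shows "(THE g. g \<in> B \<and> (\<lambda>n. nB (s n - g)) \<longlonglongrightarrow> 0) \<in> B"
proof -
  obtain g where g: "g \<in> B" "(\<lambda>n. nB (s n - g)) \<longlonglongrightarrow> 0" using complete[OF s cauchy] by blast
  have "(THE g. g \<in> B \<and> (\<lambda>n. nB (s n - g)) \<longlonglongrightarrow> 0) = g"
  proof (rule the_equality)
    show "g \<in> B \<and> (\<lambda>n. nB (s n - g)) \<longlonglongrightarrow> 0" using g by simp
    show "g' = g" if "g' \<in> B \<and> (\<lambda>n. nB (s n - g')) \<longlonglongrightarrow> 0" for g'
      using limit_unique[OF s _ _ g] that by blast
  qed
  then show ?thesis using g(1) by simp
qed

end

locale geometrically_ergodic = function_banach_space E B nB
  for E :: "'e measure" and B nB +
  fixes \<nu> :: "'e measure" and Q :: "'e \<Rightarrow> 'e measure"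
  assumes H1: "H1 E \<nu> Q B nB"
begin

lemma Q_in_B: "h \<in> B \<Longrightarrow> Qop Q h \<in> B"
  using H1 unfolding H1_def by blast

lemma Qpow_in_B: "f \<in> B \<Longrightarrow> (Qop Q ^^ n) f \<in> B"
  by (induction n) (auto intro: Q_in_B)

lemma centred_contraction:
  assumes fB: "f \<in> B" and mean0: "(\<integral>x. f x \<partial>\<nu>) = 0"
  obtains C r where "0 \<le> C" "0 \<le> r" "r < 1" "\<And>n. n \<ge> 1 \<Longrightarrow> nB ((Qop Q ^^ n) f) \<le> C * r ^ n * nB f"
proof -
  obtain C \<kappa>0 where C: "C \<ge> 0" "\<kappa>0 < 1"
    and geo: "\<And>n h. n \<ge> 1 \<Longrightarrow> h \<in> B \<Longrightarrow> nB ((Qop Q ^^ n) h - (\<lambda>_. \<integral>x. h x \<partial>\<nu>)) \<le> C * \<kappa>0 ^ n * nB h"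
    using H1 unfolding H1_def by blast
  have z: "(\<lambda>_. \<integral>x. f x \<partial>\<nu>) = 0" using mean0 by (simp add: zero_fun_def)
  define r where "r = max \<kappa>0 0"
  have nf: "0 \<le> nB f" by (rule norm_nonneg[OF fB])
  have "nB ((Qop Q ^^ n) f) \<le> C * r ^ n * nB f" if n: "n \<ge> 1" for n
  proof (cases "0 \<le> \<kappa>0")
    case True
    then show ?thesis using geo[OF n fB] unfolding z r_def by simp
  next
    case False
    text \<open>A negative contraction constant forces Q f = 0, hence all powers vanish.\<close>
    have "nB (Qop Q f) \<le> C * \<kappa>0 * nB f" using geo[OF _ fB, of 1] unfolding z by simp
    also have "\<dots> \<le> 0" using C False nf by (simp add: mult_nonneg_nonpos mult_nonpos_nonneg)
    finally have Qf: "Qop Q f = 0" using norm_eq_zero[OF Q_in_B[OF fB]] norm_nonneg[OF Q_in_B[OF fB]] by simp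
    have Q0: "(Qop Q ^^ m) (\<lambda>_::'e. 0::complex) = (\<lambda>_. 0)" for m
      by (induction m) (simp_all add: Qop_def)
    obtain m where "n = Suc m" using n by (cases n) auto
    then have "(Qop Q ^^ n) f = 0" using Qf Q0 by (simp add: funpow_Suc_right zero_fun_def del: funpow.simps)
    then show ?thesis using norm_eq_zero[OF B_zero] C nf by (simp add: r_def)
  qed
  moreover have "0 \<le> r" "r < 1" using C unfolding r_def by auto
  ultimately show ?thesis using that C by blast
qed

lemma neumann_partial_sums_cauchy:
  assumes fB: "f \<in> B" and mean0: "(\<integral>x. f x \<partial>\<nu>) = 0"
  defines "S \<equiv> \<lambda>N. \<Sum>n<N. (Qop Q ^^ n) f"
  shows "\<forall>e>0. \<exists>N. \<forall>m\<ge>N. \<forall>n\<ge>N. nB (S m - S n) < e"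
proof (intro allI impI)
  fix e :: real assume e: "0 < e"
  obtain C r where C: "0 \<le> C" and r: "0 \<le> r" "r < 1"
    and bnd: "\<And>n. n \<ge> 1 \<Longrightarrow> nB ((Qop Q ^^ n) f) \<le> C * r ^ n * nB f"
    using centred_contraction[OF fB mean0] by blast
  have nf: "0 \<le> nB f" by (rule norm_nonneg[OF fB])
  have SB: "S N \<in> B" for N unfolding S_def using B_sum[of "{..<N}" "\<lambda>n. (Qop Q ^^ n) f"] Qpow_in_B[OF fB] by simp
  have tail: "nB (S n - S m) \<le> C * nB f * (r ^ m / (1 - r))" if mn: "m \<le> n" and m1: "1 \<le> m" for m n
  proof -
    have sp: "{..<n} = {..<m} \<union> {m..<n}" "{..<m} \<inter> {m..<n} = {}" using mn by auto
    have "S n = S m + (\<Sum>k\<in>{m..<n}. (Qop Q ^^ k) f)"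
      unfolding S_def sp(1) by (rule sum.union_disjoint) (use sp(2) in auto)
    then have "nB (S n - S m) \<le> (\<Sum>k\<in>{m..<n}. nB ((Qop Q ^^ k) f))"
      using B_sum[of "{m..<n}" "\<lambda>k. (Qop Q ^^ k) f"] Qpow_in_B[OF fB] by simp
    also have "\<dots> \<le> (\<Sum>k\<in>{m..<n}. C * nB f * r ^ k)"
      by (intro sum_mono) (use bnd m1 in \<open>auto simp: mult_ac\<close>)
    also have "\<dots> = C * nB f * (\<Sum>k\<in>{m..<n}. r ^ k)" by (simp add: sum_distrib_left)
    also have "\<dots> \<le> C * nB f * (r ^ m / (1 - r))"
      by (intro mult_left_mono geometric_tail_le) (use r mn C nf in auto)
    finally show ?thesis .
  qed
  have "(\<lambda>N. C * nB f * (r ^ N / (1 - r))) \<longlonglongrightarrow> C * nB f * (0 / (1 - r))"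
    by (intro tendsto_mult tendsto_const tendsto_divide LIMSEQ_power_zero) (use r in auto)
  then have "\<forall>\<^sub>F N in sequentially. C * nB f * (r ^ N / (1 - r)) < e"
    using e by (simp add: order_tendsto_iff)
  then obtain N0 where N0: "\<And>N. N \<ge> N0 \<Longrightarrow> C * nB f * (r ^ N / (1 - r)) < e"
    by (auto simp: eventually_sequentially)
  have key: "nB (S n - S m) < e" if "max N0 1 \<le> m" "m \<le> n" for m n
    using tail[of m n] N0[of m] that by simp
  show "\<exists>N. \<forall>m\<ge>N. \<forall>n\<ge>N. nB (S m - S n) < e"
  proof (intro exI[of _ "max N0 1"] allI impI)
    fix m n assume "max N0 1 \<le> m" "max N0 1 \<le> n"
    then show "nB (S m - S n) < e"
      using key[of n m] key[of m n] norm_diff_commute[OF SB SB, of m n] by (cases "n \<le> m") auto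
  qed
qed

lemma neumann_series_in_B:
  assumes fB: "f \<in> B" and mean0: "(\<integral>x. f x \<partial>\<nu>) = 0"
  shows "(THE g. g \<in> B \<and> (\<lambda>N. nB ((\<Sum>n<N. (Qop Q ^^ n) f) - g)) \<longlonglongrightarrow> 0) \<in> B"
proof (rule limit_in_B)
  show "(\<Sum>n<N. (Qop Q ^^ n) f) \<in> B" for N
    using B_sum[of "{..<N}" "\<lambda>n. (Qop Q ^^ n) f"] Qpow_in_B[OF fB] by simp
qed (rule neumann_partial_sums_cauchy[OF fB mean0])

lemma xi_check_moments:
  assumes L3: "\<forall>f\<in>B. integrable \<nu> (\<lambda>x. (cmod (f x)) ^ 3)"
    and nuE: "sets \<nu> = sets E"
    and \<xi>B: "(\<lambda>x. complex_of_real (\<xi> x)) \<in> B" and mean0: "(\<integral>x. \<xi> x \<partial>\<nu>) = 0"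
  shows "xi_check Q B nB \<xi> \<in> borel_measurable E"
    and "integrable \<nu> (\<lambda>x. \<bar>xi_check Q B nB \<xi> x\<bar> ^ 3)"
proof -
  define g where "g = (THE g. g \<in> B \<and> (\<lambda>N. nB ((\<Sum>n<N. (Qop Q ^^ n) (\<lambda>y. complex_of_real (\<xi> y))) - g)) \<longlonglongrightarrow> 0)"
  have gB: "g \<in> B" unfolding g_def by (rule neumann_series_in_B[OF \<xi>B]) (use mean0 in simp)
  have xc: "xi_check Q B nB \<xi> = (\<lambda>x. Re (g x))" unfolding xi_check_def g_def ..
  have gm: "g \<in> borel_measurable E" using gB B_measurable by blast
  then show xcm: "xi_check Q B nB \<xi> \<in> borel_measurable E" unfolding xc by simp
  show "integrable \<nu> (\<lambda>x. \<bar>xi_check Q B nB \<xi> x\<bar> ^ 3)"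
  proof (rule Bochner_Integration.integrable_bound)
    show "integrable \<nu> (\<lambda>x. (cmod (g x)) ^ 3)" using L3 gB by blast
    show "(\<lambda>x. \<bar>xi_check Q B nB \<xi> x\<bar> ^ 3) \<in> borel_measurable \<nu>"
      using xcm by (simp add: measurable_cong_sets[OF nuE refl])
    show "AE x in \<nu>. norm (\<bar>xi_check Q B nB \<xi> x\<bar> ^ 3) \<le> norm ((cmod (g x)) ^ 3)"
      unfolding xc by (intro AE_I2) (simp add: abs_Re_le_cmod power_mono)
  qed
qed

end

section \<open>Stationary Markov chains\<close>

lemma emeasure_prob_space: "prob_space N \<Longrightarrow> emeasure N A = ennreal (measure N A)"
  unfolding prob_space_def using finite_measure.emeasure_eq_measure by blast

locale stationary_markov_chain =
  fixes M :: "'w measure" and E :: "'e measure" and Q :: "'e \<Rightarrow> 'e measure"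
    and X :: "nat \<Rightarrow> 'w \<Rightarrow> 'e" and \<nu> :: "'e measure"
  assumes transition: "transition_prob E Q" and chain: "markov_chain M E Q X"
    and invariant: "invariant_prob E Q \<nu>" and initial: "distr M E (X 0) = \<nu>"
begin

lemma prob_M: "prob_space M" using chain unfolding markov_chain_def by auto

lemma X_measurable[measurable]: "X n \<in> M \<rightarrow>\<^sub>M E" using chain unfolding markov_chain_def by auto

lemma Q_prob_kernel: "Q \<in> E \<rightarrow>\<^sub>M prob_algebra E"
  using transition unfolding transition_prob_def by auto

lemma Q_kernel[measurable]: "Q \<in> E \<rightarrow>\<^sub>M subprob_algebra E"
  using Q_prob_kernel by (rule measurable_prob_algebraD)

lemma Q_prob: "x \<in> space E \<Longrightarrow> prob_space (Q x)" "x \<in> space E \<Longrightarrow> sets (Q x) = sets E"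
  using measurable_space[OF Q_prob_kernel, of x] by (auto simp: space_prob_algebra)

lemma nu_prob: "prob_space \<nu>" "sets \<nu> = sets E"
  using invariant unfolding invariant_prob_def by auto

lemma nu_integrable_const: "integrable \<nu> (\<lambda>_. c)"
  using nu_prob(1) unfolding prob_space_def by (blast intro: finite_measure.integrable_const)

lemma space_nu: "space \<nu> = space E" using nu_prob(2) by (rule sets_eq_imp_space_eq)

lemma measurable_nu: "f \<in> borel_measurable E \<Longrightarrow> f \<in> borel_measurable \<nu>"
  by (simp add: measurable_cong_sets[OF nu_prob(2) refl])

lemma space_M_nonempty: "space M \<noteq> {}" using prob_space.not_empty[OF prob_M] .

lemma Qop_measurable[measurable]:
  fixes f :: "'e \<Rightarrow> 'b::{banach,second_countable_topology}"
  assumes [measurable]: "f \<in> borel_measurable E"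
  shows "Qop Q f \<in> borel_measurable E"
  unfolding Qop_def by (rule measurable_compose[OF Q_kernel integral_measurable_subprob_algebra]) simp

lemma Qpow_measurable:
  fixes f :: "'e \<Rightarrow> real"
  assumes "f \<in> borel_measurable E"
  shows "(Qop Q ^^ p) f \<in> borel_measurable E"
  by (induction p) (use assms in auto)

lemma kernel_X: "(\<lambda>\<omega>. Q (X n \<omega>)) \<in> M \<rightarrow>\<^sub>M prob_algebra E"
  by (rule measurable_compose[OF X_measurable Q_prob_kernel])

lemma kernel_X_sub[measurable]: "(\<lambda>\<omega>. Q (X n \<omega>)) \<in> M \<rightarrow>\<^sub>M subprob_algebra E"
  by (rule measurable_compose[OF X_measurable Q_kernel])

definition path :: "nat \<Rightarrow> 'w \<Rightarrow> nat \<Rightarrow> 'e" where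
  "path n \<omega> = (\<lambda>i\<in>{..n}. X i \<omega>)"

lemma path_measurable[measurable]: "path n \<in> M \<rightarrow>\<^sub>M PiM {..n} (\<lambda>_. E)"
  unfolding path_def by (rule measurable_restrict) simp

lemma path_apply: "i \<le> n \<Longrightarrow> path n \<omega> i = X i \<omega>" by (simp add: path_def)

lemma markov_cylinder:
  assumes A[measurable]: "A \<in> sets E" and C: "\<And>i. i \<le> n \<Longrightarrow> C i \<in> sets E"
    and S: "S = {\<omega>\<in>space M. \<forall>i\<le>n. X i \<omega> \<in> C i}"
  shows "emeasure M (S \<inter> {\<omega>\<in>space M. X (Suc n) \<omega> \<in> A})
       = (\<integral>\<^sup>+\<omega>. emeasure (Q (X n \<omega>)) A * indicator S \<omega> \<partial>M)"
proof -
  interpret prob_space M by (rule prob_M)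
  have Sm[measurable]: "S \<in> sets M" unfolding S using C by measurable
  define C' where "C' = C(Suc n := A)"
  have C': "\<forall>i\<le>Suc n. C' i \<in> sets E" using C A by (auto simp: C'_def le_Suc_eq)
  have mc: "measure M {\<omega>\<in>space M. \<forall>i\<le>Suc n. X i \<omega> \<in> C' i}
      = (\<integral>\<omega>. indicator {\<omega>\<in>space M. \<forall>i\<le>n. X i \<omega> \<in> C' i} \<omega> * measure (Q (X n \<omega>)) (C' (Suc n)) \<partial>M)"
    using chain C' unfolding markov_chain_def by blast
  have set1: "{\<omega>\<in>space M. \<forall>i\<le>Suc n. X i \<omega> \<in> C' i} = S \<inter> {\<omega>\<in>space M. X (Suc n) \<omega> \<in> A}"
    by (auto simp: S C'_def le_Suc_eq)
  have set2: "{\<omega>\<in>space M. \<forall>i\<le>n. X i \<omega> \<in> C' i} = S" by (auto simp: S C'_def)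
  have Qle1: "measure (Q (X n \<omega>)) A \<le> 1" if "\<omega> \<in> space M" for \<omega>
    using that by (intro prob_space.prob_le_1 Q_prob) (meson X_measurable measurable_space)
  have "emeasure M (S \<inter> {\<omega>\<in>space M. X (Suc n) \<omega> \<in> A})
      = ennreal (\<integral>\<omega>. indicator S \<omega> * measure (Q (X n \<omega>)) A \<partial>M)"
    using mc unfolding set1 set2 by (simp add: emeasure_eq_measure C'_def)
  also have "\<dots> = (\<integral>\<^sup>+\<omega>. ennreal (indicator S \<omega> * measure (Q (X n \<omega>)) A) \<partial>M)"
  proof (rule nn_integral_eq_integral[symmetric])
    show "integrable M (\<lambda>\<omega>. indicator S \<omega> * measure (Q (X n \<omega>)) A)"
    proof (rule integrable_const_bound[where B=1])
      show "AE x in M. norm (indicator S x * measure (Q (X n x)) A) \<le> 1"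
        using Qle1 by (intro AE_I2) (simp add: indicator_def abs_mult)
      show "(\<lambda>\<omega>. indicator S \<omega> * measure (Q (X n \<omega>)) A) \<in> borel_measurable M"
        by (intro borel_measurable_times borel_measurable_indicator Sm
            measurable_compose[OF X_measurable measurable_compose[OF Q_kernel measurable_measure_subprob_algebra]] A)
    qed
  qed auto
  also have "\<dots> = (\<integral>\<^sup>+\<omega>. emeasure (Q (X n \<omega>)) A * indicator S \<omega> \<partial>M)"
  proof (intro nn_integral_cong)
    fix \<omega> assume "\<omega> \<in> space M"
    then have "X n \<omega> \<in> space E" by (meson X_measurable measurable_space)
    then interpret Qw: prob_space "Q (X n \<omega>)" by (rule Q_prob)
    show "ennreal (indicator S \<omega> * measure (Q (X n \<omega>)) A) = emeasure (Q (X n \<omega>)) A * indicator S \<omega>"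
      by (auto split: split_indicator simp: Qw.emeasure_eq_measure)
  qed
  finally show ?thesis .
qed

text \<open>Extension from cylinders to all measurable functionals F of the path, by uniqueness of
  measures on E^{0..n}: E[F(X_0..X_n) 1_A(X_(n+1))] = E[F(X_0..X_n) Q(X_n, A)].\<close>

lemma markov_nn_integral:
  fixes F :: "(nat \<Rightarrow> 'e) \<Rightarrow> ennreal"
  assumes A[measurable]: "A \<in> sets E" and F[measurable]: "F \<in> borel_measurable (PiM {..n} (\<lambda>_. E))"
  shows "(\<integral>\<^sup>+\<omega>. F (path n \<omega>) * indicator A (X (Suc n) \<omega>) \<partial>M)
       = (\<integral>\<^sup>+\<omega>. F (path n \<omega>) * emeasure (Q (X n \<omega>)) A \<partial>M)"
proof -
  interpret prob_space M by (rule prob_M)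
  define D1 where "D1 = density M (\<lambda>\<omega>. indicator A (X (Suc n) \<omega>))"
  define D2 where "D2 = density M (\<lambda>\<omega>. emeasure (Q (X n \<omega>)) A)"
  define P1 where "P1 = distr D1 (PiM {..n} (\<lambda>_. E)) (path n)"
  define P2 where "P2 = distr D2 (PiM {..n} (\<lambda>_. E)) (path n)"
  have em: "(\<lambda>\<omega>. emeasure (Q (X n \<omega>)) A) \<in> borel_measurable M" by measurable
  have pm1: "path n \<in> D1 \<rightarrow>\<^sub>M PiM {..n} (\<lambda>_. E)" unfolding D1_def by simp
  have pm2: "path n \<in> D2 \<rightarrow>\<^sub>M PiM {..n} (\<lambda>_. E)" unfolding D2_def by simp
  have box: "emeasure P1 (Pi\<^sub>E {..n} C) = emeasure P2 (Pi\<^sub>E {..n} C)"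
    if C: "\<And>i. i \<in> {..n} \<Longrightarrow> C i \<in> sets E" for C
  proof -
    define S where "S = {\<omega>\<in>space M. \<forall>i\<le>n. X i \<omega> \<in> C i}"
    have Cs: "Pi\<^sub>E {..n} C \<in> sets (PiM {..n} (\<lambda>_. E))" using C by (intro sets_PiM_I_finite) auto
    have pre: "path n -` Pi\<^sub>E {..n} C \<inter> space M = S" by (auto simp: S_def path_def PiE_iff)
    have Sm: "S \<in> sets M" using pre path_measurable Cs by (metis measurable_sets)
    have "emeasure P1 (Pi\<^sub>E {..n} C) = emeasure D1 S"
      unfolding P1_def using emeasure_distr[OF pm1 Cs] pre by (simp add: D1_def)
    also have "\<dots> = (\<integral>\<^sup>+\<omega>. indicator A (X (Suc n) \<omega>) * indicator S \<omega> \<partial>M)"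
      unfolding D1_def by (rule emeasure_density) (use Sm in auto)
    also have "\<dots> = (\<integral>\<^sup>+\<omega>. indicator (S \<inter> {\<omega>\<in>space M. X (Suc n) \<omega> \<in> A}) \<omega> \<partial>M)"
      by (intro nn_integral_cong) (auto split: split_indicator)
    also have "\<dots> = emeasure M (S \<inter> {\<omega>\<in>space M. X (Suc n) \<omega> \<in> A})"
      using Sm by (intro nn_integral_indicator sets.Int) auto
    also have "\<dots> = (\<integral>\<^sup>+\<omega>. emeasure (Q (X n \<omega>)) A * indicator S \<omega> \<partial>M)"
      by (rule markov_cylinder[OF A _ S_def]) (use C in auto)
    also have "\<dots> = emeasure D2 S"
      unfolding D2_def by (rule emeasure_density[symmetric]) (use Sm em in auto)
    also have "\<dots> = emeasure P2 (Pi\<^sub>E {..n} C)"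
      unfolding P2_def using emeasure_distr[OF pm2 Cs] pre by (simp add: D2_def)
    finally show ?thesis .
  qed
  have "P1 = P2"
  proof (rule measure_eqI_PiM_finite[where A="\<lambda>_. space (PiM {..n} (\<lambda>_. E))"])
    show "emeasure P1 (Pi\<^sub>E {..n} C) = emeasure P2 (Pi\<^sub>E {..n} C)"
      if "\<And>i. i \<in> {..n} \<Longrightarrow> C i \<in> sets E" for C
      using box that by blast
    show "range (\<lambda>_. space (PiM {..n} (\<lambda>_. E))) \<subseteq> prod_algebra {..n} (\<lambda>_. E)"
      by (auto simp: space_PiM intro!: prod_algebraI_finite)
    have "emeasure P1 (space (PiM {..n} (\<lambda>_. E))) = emeasure D1 (space M)"
    proof -
      have "path n -` space (PiM {..n} (\<lambda>_. E)) \<inter> space M = space M"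
        using measurable_space[OF path_measurable] by auto
      then show ?thesis unfolding P1_def using pm1 by (simp add: emeasure_distr D1_def)
    qed
    also have "\<dots> = (\<integral>\<^sup>+\<omega>. indicator A (X (Suc n) \<omega>) * indicator (space M) \<omega> \<partial>M)"
      unfolding D1_def by (rule emeasure_density) auto
    also have "\<dots> \<le> (\<integral>\<^sup>+\<omega>. 1 \<partial>M)" by (intro nn_integral_mono) (auto split: split_indicator)
    also have "\<dots> = 1" using emeasure_space_1 by simp
    finally show "emeasure P1 (space (PiM {..n} (\<lambda>_. E))) \<noteq> \<infinity>" by (auto simp: top_unique)
  qed (auto simp: P1_def P2_def)
  then have "(\<integral>\<^sup>+p. F p \<partial>P1) = (\<integral>\<^sup>+p. F p \<partial>P2)" by simp
  then show ?thesis unfolding P1_def P2_def D1_def D2_def using em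
    by (simp add: nn_integral_distr nn_integral_density mult.commute)
qed

lemma distr_next_density:
  fixes F :: "(nat \<Rightarrow> 'e) \<Rightarrow> real"
  assumes F[measurable]: "F \<in> borel_measurable (PiM {..n} (\<lambda>_. E))" and Fnn: "\<And>p. 0 \<le> F p"
  shows "distr (density M (\<lambda>\<omega>. F (path n \<omega>))) E (X (Suc n))
       = density M (\<lambda>\<omega>. F (path n \<omega>)) \<bind> (\<lambda>\<omega>. Q (X n \<omega>))"
proof -
  define D where "D = density M (\<lambda>\<omega>. ennreal (F (path n \<omega>)))"
  have sD: "sets D = sets M" "space D = space M" unfolding D_def by auto
  have kD: "(\<lambda>\<omega>. Q (X n \<omega>)) \<in> D \<rightarrow>\<^sub>M subprob_algebra E"
    using kernel_X_sub by (simp add: measurable_cong_sets[OF sD(1) refl])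
  have neD: "space D \<noteq> {}" using sD space_M_nonempty by simp
  have XD: "X (Suc n) \<in> D \<rightarrow>\<^sub>M E" using X_measurable by (simp add: measurable_cong_sets[OF sD(1) refl])
  show ?thesis unfolding D_def[symmetric]
  proof (rule measure_eqI)
    show "sets (distr D E (X (Suc n))) = sets (D \<bind> (\<lambda>\<omega>. Q (X n \<omega>)))"
      by (simp, rule sets_bind[OF _ neD, symmetric]) (use measurable_space[OF X_measurable] Q_prob(2) sD in auto)
    fix A assume "A \<in> sets (distr D E (X (Suc n)))"
    then have A[measurable]: "A \<in> sets E" by simp
    have "emeasure (distr D E (X (Suc n))) A = emeasure D (X (Suc n) -` A \<inter> space D)"
      by (rule emeasure_distr[OF XD A])
    also have "\<dots> = (\<integral>\<^sup>+\<omega>. ennreal (F (path n \<omega>)) * indicator (X (Suc n) -` A \<inter> space M) \<omega> \<partial>M)"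
      unfolding D_def sD(2)[unfolded D_def] by (rule emeasure_density) measurable
    also have "\<dots> = (\<integral>\<^sup>+\<omega>. ennreal (F (path n \<omega>)) * indicator A (X (Suc n) \<omega>) \<partial>M)"
      by (intro nn_integral_cong) (auto split: split_indicator)
    also have "\<dots> = (\<integral>\<^sup>+\<omega>. ennreal (F (path n \<omega>)) * emeasure (Q (X n \<omega>)) A \<partial>M)"
      by (rule markov_nn_integral[where F="\<lambda>p. ennreal (F p)"]) measurable
    also have "\<dots> = (\<integral>\<^sup>+\<omega>. emeasure (Q (X n \<omega>)) A \<partial>D)"
      unfolding D_def by (rule nn_integral_density[symmetric]) measurable
    also have "\<dots> = emeasure (D \<bind> (\<lambda>\<omega>. Q (X n \<omega>))) A"
      by (rule emeasure_bind[symmetric, OF neD kD A])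
    finally show "emeasure (distr D E (X (Suc n))) A = emeasure (D \<bind> (\<lambda>\<omega>. Q (X n \<omega>))) A" .
  qed
qed

lemma invariant_bind: "\<nu> \<bind> Q = \<nu>"
proof (rule measure_eqI)
  interpret nu: prob_space \<nu> by (rule nu_prob(1))
  have ne: "space \<nu> \<noteq> {}" using nu.not_empty .
  have Qn: "Q \<in> \<nu> \<rightarrow>\<^sub>M subprob_algebra E" using Q_kernel by (simp add: measurable_cong_sets[OF nu_prob(2) refl])
  show sb: "sets (\<nu> \<bind> Q) = sets \<nu>"
    using nu_prob(2) by (subst sets_bind[OF _ ne]) (auto simp: space_nu Q_prob(2))
  fix A assume "A \<in> sets (\<nu> \<bind> Q)"
  then have A: "A \<in> sets E" using sb nu_prob(2) by simp
  have "emeasure (\<nu> \<bind> Q) A = (\<integral>\<^sup>+x. emeasure (Q x) A \<partial>\<nu>)"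
    by (rule emeasure_bind[OF ne Qn A])
  also have "\<dots> = (\<integral>\<^sup>+x. ennreal (measure (Q x) A) \<partial>\<nu>)"
    by (intro nn_integral_cong) (simp add: space_nu emeasure_prob_space[OF Q_prob(1)])
  also have "\<dots> = ennreal (\<integral>x. measure (Q x) A \<partial>\<nu>)"
  proof (rule nn_integral_eq_integral)
    show "integrable \<nu> (\<lambda>x. measure (Q x) A)"
    proof (rule nu.integrable_const_bound[where B=1])
      show "AE x in \<nu>. norm (measure (Q x) A) \<le> 1"
        by (intro AE_I2) (simp add: space_nu prob_space.prob_le_1[OF Q_prob(1)])
      show "(\<lambda>x. measure (Q x) A) \<in> borel_measurable \<nu>"
        using measurable_compose[OF Qn measurable_measure_subprob_algebra[OF A]] .
    qed
  qed auto
  also have "\<dots> = ennreal (measure \<nu> A)" using invariant A unfolding invariant_prob_def by simp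
  also have "\<dots> = emeasure \<nu> A" by (simp add: emeasure_prob_space[OF nu_prob(1)])
  finally show "emeasure (\<nu> \<bind> Q) A = emeasure \<nu> A" .
qed

lemma stationary: "distr M E (X k) = \<nu>"
proof (induction k)
  case 0 show ?case by (rule initial)
next
  case (Suc k)
  have "distr M E (X (Suc k)) = distr (density M (\<lambda>\<omega>. (\<lambda>_. 1::real) (path k \<omega>))) E (X (Suc k))"
    by (simp add: density_1)
  also have "\<dots> = density M (\<lambda>\<omega>. (\<lambda>_. 1::real) (path k \<omega>)) \<bind> (\<lambda>\<omega>. Q (X k \<omega>))"
    by (rule distr_next_density) auto
  also have "\<dots> = M \<bind> (\<lambda>\<omega>. Q (X k \<omega>))" by (simp add: density_1)
  also have "\<dots> = distr M E (X k) \<bind> Q"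
    by (rule bind_distr[symmetric, OF X_measurable Q_kernel space_M_nonempty])
  also have "\<dots> = \<nu>" using Suc invariant_bind by simp
  finally show ?case .
qed

lemma integral_X:
  fixes f :: "'e \<Rightarrow> 'b::{banach,second_countable_topology}"
  assumes f[measurable]: "f \<in> borel_measurable E"
  shows "integrable M (\<lambda>\<omega>. f (X k \<omega>)) \<longleftrightarrow> integrable \<nu> f"
    and "(\<integral>\<omega>. f (X k \<omega>) \<partial>M) = (\<integral>x. f x \<partial>\<nu>)"
  using integrable_distr_eq[OF X_measurable f, of k] integral_distr[OF X_measurable f, of k]
  by (simp_all add: stationary)

lemma invariant_integral:
  fixes f :: "'e \<Rightarrow> real"
  assumes f[measurable]: "f \<in> borel_measurable E" and i: "integrable \<nu> f"
  shows "integrable \<nu> (Qop Q f)" "(\<integral>x. Qop Q f x \<partial>\<nu>) = (\<integral>x. f x \<partial>\<nu>)"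
    "AE x in \<nu>. integrable (Q x) f"
proof -
  have Qn: "Q \<in> \<nu> \<rightarrow>\<^sub>M prob_algebra E" using Q_prob_kernel by (simp add: measurable_cong_sets[OF nu_prob(2) refl])
  have ne: "space \<nu> \<noteq> {}" using prob_space.not_empty[OF nu_prob(1)] .
  have i': "integrable (\<nu> \<bind> Q) f" using i invariant_bind by simp
  note K = integral_bind_real[OF Qn f i' ne]
  show "integrable \<nu> (Qop Q f)" using K(1) unfolding Qop_def .
  show "(\<integral>x. Qop Q f x \<partial>\<nu>) = (\<integral>x. f x \<partial>\<nu>)" using K(2) invariant_bind unfolding Qop_def by simp
  show "AE x in \<nu>. integrable (Q x) f" by (rule K(3))
qed

lemma markov_property_nonneg:
  fixes F :: "(nat \<Rightarrow> 'e) \<Rightarrow> real" and g :: "'e \<Rightarrow> complex"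
  assumes F[measurable]: "F \<in> borel_measurable (PiM {..n} (\<lambda>_. E))" and Fnn: "\<And>p. 0 \<le> F p"
    and Fb: "\<And>p. F p \<le> 1"
    and g[measurable]: "g \<in> borel_measurable E" and gi: "integrable \<nu> g"
  shows "integrable M (\<lambda>\<omega>. F (path n \<omega>) *\<^sub>R (\<integral>y. g y \<partial>Q (X n \<omega>)))"
    and "(\<integral>\<omega>. F (path n \<omega>) *\<^sub>R g (X (Suc n) \<omega>) \<partial>M)
       = (\<integral>\<omega>. F (path n \<omega>) *\<^sub>R (\<integral>y. g y \<partial>Q (X n \<omega>)) \<partial>M)"
proof -
  define D where "D = density M (\<lambda>\<omega>. ennreal (F (path n \<omega>)))"
  have sD: "sets D = sets M" "space D = space M" unfolding D_def by auto
  have kD: "(\<lambda>\<omega>. Q (X n \<omega>)) \<in> D \<rightarrow>\<^sub>M prob_algebra E"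
    using kernel_X by (simp add: measurable_cong_sets[OF sD(1) refl])
  have neD: "space D \<noteq> {}" using sD space_M_nonempty by simp
  have XD: "X (Suc n) \<in> D \<rightarrow>\<^sub>M E" using X_measurable by (simp add: measurable_cong_sets[OF sD(1) refl])
  have giM: "integrable M (\<lambda>\<omega>. g (X (Suc n) \<omega>))" using integral_X(1)[OF g] gi by simp
  have iM: "integrable M (\<lambda>\<omega>. F (path n \<omega>) *\<^sub>R g (X (Suc n) \<omega>))"
  proof (rule Bochner_Integration.integrable_bound[OF giM])
    show "AE x in M. norm (F (path n x) *\<^sub>R g (X (Suc n) x)) \<le> norm (g (X (Suc n) x))"
      using Fnn Fb by (intro AE_I2) (auto intro!: mult_left_le_one_le simp: abs_of_nonneg)
  qed measurable
  have iD: "integrable D (\<lambda>\<omega>. g (X (Suc n) \<omega>))"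
    unfolding D_def using iM Fnn by (subst integrable_density) auto
  have law: "distr D E (X (Suc n)) = D \<bind> (\<lambda>\<omega>. Q (X n \<omega>))"
    using distr_next_density[OF F Fnn] unfolding D_def by simp
  have iB: "integrable (D \<bind> (\<lambda>\<omega>. Q (X n \<omega>))) g"
    using iD unfolding law[symmetric] by (subst integrable_distr_eq[OF XD g])
  note K = integral_bind[OF kD g iB neD]
  have Km: "(\<lambda>\<omega>. \<integral>y. g y \<partial>Q (X n \<omega>)) \<in> borel_measurable M"
    by (rule measurable_compose[OF kernel_X_sub integral_measurable_subprob_algebra]) simp
  show "integrable M (\<lambda>\<omega>. F (path n \<omega>) *\<^sub>R (\<integral>y. g y \<partial>Q (X n \<omega>)))"
    using K(1) Fnn Km unfolding D_def by (subst (asm) integrable_density) auto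
  have "(\<integral>\<omega>. F (path n \<omega>) *\<^sub>R g (X (Suc n) \<omega>) \<partial>M) = (\<integral>\<omega>. g (X (Suc n) \<omega>) \<partial>D)"
    unfolding D_def using Fnn by (subst integral_density) auto
  also have "\<dots> = (\<integral>x. g x \<partial>(D \<bind> (\<lambda>\<omega>. Q (X n \<omega>))))"
    unfolding law[symmetric] by (rule integral_distr[symmetric, OF XD g])
  also have "\<dots> = (\<integral>\<omega>. (\<integral>y. g y \<partial>Q (X n \<omega>)) \<partial>D)" by (rule K(2))
  also have "\<dots> = (\<integral>\<omega>. F (path n \<omega>) *\<^sub>R (\<integral>y. g y \<partial>Q (X n \<omega>)) \<partial>M)"
    unfolding D_def using Fnn Km by (subst integral_density) auto
  finally show "(\<integral>\<omega>. F (path n \<omega>) *\<^sub>R g (X (Suc n) \<omega>) \<partial>M)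
       = (\<integral>\<omega>. F (path n \<omega>) *\<^sub>R (\<integral>y. g y \<partial>Q (X n \<omega>)) \<partial>M)" .
qed

lemma markov_property:
  fixes F :: "(nat \<Rightarrow> 'e) \<Rightarrow> complex" and g :: "'e \<Rightarrow> complex"
  assumes F[measurable]: "F \<in> borel_measurable (PiM {..n} (\<lambda>_. E))" and Fb: "\<And>p. cmod (F p) \<le> 1"
    and g[measurable]: "g \<in> borel_measurable E" and gi: "integrable \<nu> g"
  shows "(\<integral>\<omega>. F (path n \<omega>) * g (X (Suc n) \<omega>) \<partial>M)
       = (\<integral>\<omega>. F (path n \<omega>) * (\<integral>y. g y \<partial>Q (X n \<omega>)) \<partial>M)"
proof -
  define F1 where "F1 p = max 0 (Re (F p))" for p
  define F2 where "F2 p = max 0 (- Re (F p))" for p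
  define F3 where "F3 p = max 0 (Im (F p))" for p
  define F4 where "F4 p = max 0 (- Im (F p))" for p
  have m: "F1 \<in> borel_measurable (PiM {..n} (\<lambda>_. E))" "F2 \<in> borel_measurable (PiM {..n} (\<lambda>_. E))"
    "F3 \<in> borel_measurable (PiM {..n} (\<lambda>_. E))" "F4 \<in> borel_measurable (PiM {..n} (\<lambda>_. E))"
    unfolding F1_def F2_def F3_def F4_def by measurable
  have nn: "\<And>p. 0 \<le> F1 p" "\<And>p. 0 \<le> F2 p" "\<And>p. 0 \<le> F3 p" "\<And>p. 0 \<le> F4 p"
    unfolding F1_def F2_def F3_def F4_def by auto
  have "\<bar>Re (F p)\<bar> \<le> 1" "\<bar>Im (F p)\<bar> \<le> 1" for p
    using abs_Re_le_cmod[of "F p"] abs_Im_le_cmod[of "F p"] Fb[of p] by linarith+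
  then have bd: "\<And>p. F1 p \<le> 1" "\<And>p. F2 p \<le> 1" "\<And>p. F3 p \<le> 1" "\<And>p. F4 p \<le> 1"
    unfolding F1_def F2_def F3_def F4_def by (auto simp: abs_le_iff)
  note P1 = markov_property_nonneg[OF m(1) nn(1) bd(1) g gi]
    and P2 = markov_property_nonneg[OF m(2) nn(2) bd(2) g gi]
    and P3 = markov_property_nonneg[OF m(3) nn(3) bd(3) g gi]
    and P4 = markov_property_nonneg[OF m(4) nn(4) bd(4) g gi]
  have giM: "integrable M (\<lambda>\<omega>. g (X (Suc n) \<omega>))" using integral_X(1)[OF g] gi by simp
  have ib: "integrable M (\<lambda>\<omega>. G (path n \<omega>) *\<^sub>R g (X (Suc n) \<omega>))"
    if "G \<in> borel_measurable (PiM {..n} (\<lambda>_. E))" "\<And>p. 0 \<le> G p" "\<And>p. G p \<le> 1" for G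
  proof (rule Bochner_Integration.integrable_bound[OF giM])
    show "(\<lambda>\<omega>. G (path n \<omega>) *\<^sub>R g (X (Suc n) \<omega>)) \<in> borel_measurable M"
      using that(1) by measurable
    show "AE x in M. norm (G (path n x) *\<^sub>R g (X (Suc n) x)) \<le> norm (g (X (Suc n) x))"
      using that(2,3) by (intro AE_I2) (auto intro!: mult_left_le_one_le simp: abs_of_nonneg)
  qed
  note I1 = ib[OF m(1) nn(1) bd(1)] and I2 = ib[OF m(2) nn(2) bd(2)]
    and I3 = ib[OF m(3) nn(3) bd(3)] and I4 = ib[OF m(4) nn(4) bd(4)]
  have linear: "(\<integral>x. a x - b x + \<i> * c x - \<i> * d x \<partial>M)
      = integral\<^sup>L M a - integral\<^sup>L M b + \<i> * integral\<^sup>L M c - \<i> * integral\<^sup>L M d"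
    if "integrable M a" "integrable M b" "integrable M c" "integrable M d" for a b c d :: "'w \<Rightarrow> complex"
    using that by simp
  have dec: "\<And>p z. F p * z = F1 p *\<^sub>R z - F2 p *\<^sub>R z + \<i> * (F3 p *\<^sub>R z) - \<i> * (F4 p *\<^sub>R z)"
    unfolding F1_def F2_def F3_def F4_def by (simp add: complex_eq_iff max_def algebra_simps)
  have "(\<integral>\<omega>. F (path n \<omega>) * g (X (Suc n) \<omega>) \<partial>M)
      = (\<integral>\<omega>. F1 (path n \<omega>) *\<^sub>R g (X (Suc n) \<omega>) \<partial>M) - (\<integral>\<omega>. F2 (path n \<omega>) *\<^sub>R g (X (Suc n) \<omega>) \<partial>M)
       + \<i> * (\<integral>\<omega>. F3 (path n \<omega>) *\<^sub>R g (X (Suc n) \<omega>) \<partial>M) - \<i> * (\<integral>\<omega>. F4 (path n \<omega>) *\<^sub>R g (X (Suc n) \<omega>) \<partial>M)"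
    unfolding dec by (rule linear[OF I1 I2 I3 I4])
  also have "\<dots> = (\<integral>\<omega>. F1 (path n \<omega>) *\<^sub>R (\<integral>y. g y \<partial>Q (X n \<omega>)) \<partial>M) - (\<integral>\<omega>. F2 (path n \<omega>) *\<^sub>R (\<integral>y. g y \<partial>Q (X n \<omega>)) \<partial>M)
       + \<i> * (\<integral>\<omega>. F3 (path n \<omega>) *\<^sub>R (\<integral>y. g y \<partial>Q (X n \<omega>)) \<partial>M) - \<i> * (\<integral>\<omega>. F4 (path n \<omega>) *\<^sub>R (\<integral>y. g y \<partial>Q (X n \<omega>)) \<partial>M)"
    by (simp only: P1(2) P2(2) P3(2) P4(2))
  also have "\<dots> = (\<integral>\<omega>. F (path n \<omega>) * (\<integral>y. g y \<partial>Q (X n \<omega>)) \<partial>M)"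
    unfolding dec by (rule linear[OF P1(1) P2(1) P3(1) P4(1), symmetric])
  finally show ?thesis .
qed

end

section \<open>The recursion for the characteristic functions of the martingale part\<close>

text \<open>From here on xc is any measurable function with finite third moment satisfying (H2) and
  sigma^2 > 0; the corrector of the theorem is one instance.\<close>

locale clt_setting = stationary_markov_chain M E Q X \<nu>
  for M :: "'w measure" and E :: "'e measure" and Q X \<nu> +
  fixes xc :: "'e \<Rightarrow> real"
  assumes xc_measurable[measurable]: "xc \<in> borel_measurable E"
    and xc_cube: "integrable \<nu> (\<lambda>x. \<bar>xc x\<bar> ^ 3)"
    and H2: "H2 \<nu> Q xc"
    and sigma_pos: "0 < sigma2 \<nu> Q xc"
begin

abbreviation "Qxc \<equiv> Qop Q xc"
abbreviation "\<sigma>2 \<equiv> sigma2 \<nu> Q xc"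
abbreviation "\<psi> \<equiv> psi \<nu> Q xc"

lemma Qxc_measurable[measurable]: "Qxc \<in> borel_measurable E" by (rule Qop_measurable) simp

lemma xc_cube_measurable[measurable]: "(\<lambda>y. \<bar>xc y\<bar> ^ 3) \<in> borel_measurable E"
  by measurable

lemma xc_square_measurable[measurable]: "(\<lambda>y. (xc y)\<^sup>2) \<in> borel_measurable E"
  by measurable

lemma xc_square: "integrable \<nu> (\<lambda>x. (xc x)\<^sup>2)"
proof (rule Bochner_Integration.integrable_bound[where f="\<lambda>x. 1 + \<bar>xc x\<bar> ^ 3"])
  show "integrable \<nu> (\<lambda>x. 1 + \<bar>xc x\<bar> ^ 3)"
    using nu_integrable_const xc_cube by (rule Bochner_Integration.integrable_add)
qed (use square_le_cube in \<open>auto intro: measurable_nu\<close>)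

lemma xc_moments_Q:
  "AE x in \<nu>. x \<in> space E \<and> integrable (Q x) (\<lambda>y. \<bar>xc y\<bar> ^ 3) \<and> integrable (Q x) xc
    \<and> integrable (Q x) (\<lambda>y. (xc y)\<^sup>2)"
  using invariant_integral(3)[OF xc_cube_measurable xc_cube] AE_space
proof eventually_elim
  case (elim x)
  then have x: "x \<in> space E" by (simp add: space_nu)
  interpret Qx: prob_space "Q x" using Q_prob(1)[OF x] .
  have m: "xc \<in> borel_measurable (Q x)" by (simp add: measurable_cong_sets[OF Q_prob(2)[OF x] refl])
  have i31: "integrable (Q x) (\<lambda>y. 1 + \<bar>xc y\<bar> ^ 3)" using elim by simp
  have "integrable (Q x) xc"
    by (rule Bochner_Integration.integrable_bound[OF i31 m]) (simp add: abs_le_cube)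
  moreover have "integrable (Q x) (\<lambda>y. (xc y)\<^sup>2)"
    by (rule Bochner_Integration.integrable_bound[OF i31]) (use m square_le_cube in auto)
  ultimately show ?case using elim x by auto
qed

text \<open>By Jensen's inequality, Q xc has a third moment no larger than that of xc.\<close>

lemma Qxc_cube:
  "integrable \<nu> (\<lambda>x. \<bar>Qxc x\<bar> ^ 3)" "(\<integral>x. \<bar>Qxc x\<bar> ^ 3 \<partial>\<nu>) \<le> (\<integral>x. \<bar>xc x\<bar> ^ 3 \<partial>\<nu>)"
proof -
  note I = invariant_integral[OF xc_cube_measurable xc_cube]
  have le: "AE x in \<nu>. \<bar>Qxc x\<bar> ^ 3 \<le> Qop Q (\<lambda>y. \<bar>xc y\<bar> ^ 3) x"
    using xc_moments_Q
  proof eventually_elim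
    case (elim x)
    have m: "xc \<in> borel_measurable (Q x)"
      using elim by (simp add: measurable_cong_sets[OF Q_prob(2) refl])
    show ?case unfolding Qop_def by (rule jensen_cube[OF Q_prob(1) m]) (use elim in auto)
  qed
  show i3: "integrable \<nu> (\<lambda>x. \<bar>Qxc x\<bar> ^ 3)"
    by (rule Bochner_Integration.integrable_bound[OF I(1)]) (use le in \<open>auto intro: measurable_nu elim!: eventually_mono\<close>)
  have "(\<integral>x. \<bar>Qxc x\<bar> ^ 3 \<partial>\<nu>) \<le> (\<integral>x. Qop Q (\<lambda>y. \<bar>xc y\<bar> ^ 3) x \<partial>\<nu>)"
    by (rule integral_mono_AE[OF i3 I(1) le])
  then show "(\<integral>x. \<bar>Qxc x\<bar> ^ 3 \<partial>\<nu>) \<le> (\<integral>x. \<bar>xc x\<bar> ^ 3 \<partial>\<nu>)" using I(2) by simp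
qed

lemma Qxc_square: "integrable \<nu> (\<lambda>x. (Qxc x)\<^sup>2)"
proof (rule Bochner_Integration.integrable_bound[where f="\<lambda>x. 1 + \<bar>Qxc x\<bar> ^ 3"])
  show "integrable \<nu> (\<lambda>x. 1 + \<bar>Qxc x\<bar> ^ 3)"
    using nu_integrable_const Qxc_cube(1) by (rule Bochner_Integration.integrable_add)
qed (use square_le_cube in \<open>auto intro: measurable_nu\<close>)

lemma psi_measurable[measurable]: "\<psi> \<in> borel_measurable E"
  unfolding psi_def by measurable

text \<open>\<psi> is centred: \<nu>(Q(xc^2)) = \<nu>(xc^2) is exactly the definition of sigma^2.\<close>

lemma psi_integral: "integrable \<nu> \<psi>" "(\<integral>x. \<psi> x \<partial>\<nu>) = 0"
proof -
  interpret nu: prob_space \<nu> by (rule nu_prob(1))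
  note I = invariant_integral[OF xc_square_measurable xc_square]
  show "integrable \<nu> \<psi>" unfolding psi_def using I(1) Qxc_square by auto
  have "(\<integral>x. \<psi> x \<partial>\<nu>) = (\<integral>x. Qop Q (\<lambda>y. (xc y)\<^sup>2) x \<partial>\<nu>) - (\<integral>x. (Qxc x)\<^sup>2 \<partial>\<nu>) - \<sigma>2"
    unfolding psi_def using I(1) Qxc_square by (simp add: nu.prob_space)
  then show "(\<integral>x. \<psi> x \<partial>\<nu>) = 0" unfolding sigma2_def using I(2) by simp
qed

definition psi_iter :: "nat \<Rightarrow> 'e \<Rightarrow> real" where "psi_iter p = (Qop Q ^^ p) \<psi>"

definition norm_3_2 :: "('e \<Rightarrow> real) \<Rightarrow> real" where
  "norm_3_2 f = (\<integral>x. \<bar>f x\<bar> powr (3/2) \<partial>\<nu>) powr (2/3)"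

lemma psi_iter_measurable[measurable]: "psi_iter p \<in> borel_measurable E"
  unfolding psi_iter_def by (rule Qpow_measurable) simp

lemma psi_iter_Suc: "psi_iter (Suc p) = Qop Q (psi_iter p)" unfolding psi_iter_def by simp

lemma psi_iter_powr_3_2: "integrable \<nu> (\<lambda>x. \<bar>psi_iter p x\<bar> powr (3/2))"
  using H2 unfolding H2_def psi_iter_def by blast

lemma norm_3_2_summable: "summable (\<lambda>p. norm_3_2 (psi_iter p))"
  using H2 unfolding H2_def norm_3_2_def psi_iter_def by blast

lemma integrable_of_powr_3_2:
  fixes f :: "'e \<Rightarrow> real"
  assumes [measurable]: "f \<in> borel_measurable E" and f32: "integrable \<nu> (\<lambda>x. \<bar>f x\<bar> powr (3/2))"
  shows "integrable \<nu> f"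
proof (rule Bochner_Integration.integrable_bound[where f="\<lambda>x. 1 + \<bar>f x\<bar> powr (3/2)"])
  show "integrable \<nu> (\<lambda>x. 1 + \<bar>f x\<bar> powr (3/2))"
    using nu_integrable_const f32 by (rule Bochner_Integration.integrable_add)
qed (use abs_le_powr_3_2 in \<open>auto intro: measurable_nu\<close>)

lemma psi_iter_centred: "(\<integral>x. psi_iter p x \<partial>\<nu>) = 0"
proof (induction p)
  case 0 show ?case using psi_integral(2) unfolding psi_iter_def by simp
next
  case (Suc p)
  have "integrable \<nu> (psi_iter p)" by (rule integrable_of_powr_3_2[OF _ psi_iter_powr_3_2]) simp
  then show ?case using Suc invariant_integral(2)[of "psi_iter p"] by (simp add: psi_iter_Suc)
qed

definition T :: "nat \<Rightarrow> 'w \<Rightarrow> real" where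
  "T k \<omega> = (\<Sum>j\<in>{1..k}. xc (X j \<omega>) - Qxc (X (j - 1) \<omega>))"

definition T_path :: "nat \<Rightarrow> (nat \<Rightarrow> 'e) \<Rightarrow> real" where
  "T_path k p = (\<Sum>j\<in>{1..k}. xc (p j) - Qxc (p (j - 1)))"

lemma T_path_eq: "T k \<omega> = T_path k (path k \<omega>)"
  unfolding T_def T_path_def by (intro sum.cong) (auto simp: path_apply)

lemma T_path_measurable[measurable]: "T_path k \<in> borel_measurable (PiM {..k} (\<lambda>_. E))"
proof -
  have "(\<lambda>p. p i) \<in> PiM {..k} (\<lambda>_. E) \<rightarrow>\<^sub>M E" if "i \<le> k" for i
    using that by (intro measurable_component_singleton) simp
  then show ?thesis unfolding T_path_def
    by (intro borel_measurable_sum borel_measurable_diff measurable_compose[OF _ xc_measurable]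
        measurable_compose[OF _ Qxc_measurable]) auto
qed

lemma T_0: "T 0 \<omega> = 0" unfolding T_def by simp

lemma T_Suc: "T (Suc k) \<omega> = T k \<omega> + (xc (X (Suc k) \<omega>) - Qxc (X k \<omega>))"
  unfolding T_def by (simp add: sum.cl_ivl_Suc)

definition charf :: "real \<Rightarrow> nat \<Rightarrow> complex" where
  "charf s k = (\<integral>\<omega>. cis (s * T k \<omega>) \<partial>M)"

text \<open>The conditional characteristic function of the increment U_(k+1) given X_k = x.\<close>

definition cond_charf :: "real \<Rightarrow> 'e \<Rightarrow> complex" where
  "cond_charf s x = cis (- (s * Qxc x)) * (\<integral>y. cis (s * xc y) \<partial>Q x)"

lemma cond_charf_measurable[measurable]: "cond_charf s \<in> borel_measurable E"
proof -
  have "(\<lambda>x. \<integral>y. cis (s * xc y) \<partial>Q x) \<in> borel_measurable E"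
    by (rule measurable_compose[OF Q_kernel integral_measurable_subprob_algebra]) simp
  then show ?thesis unfolding cond_charf_def by simp
qed

lemma cond_charf_bounded: "x \<in> space E \<Longrightarrow> cmod (cond_charf s x) \<le> 1"
proof -
  assume x: "x \<in> space E"
  interpret P: prob_space "Q x" by (rule Q_prob(1)[OF x])
  have "cmod (\<integral>y. cis (s * xc y) \<partial>Q x) \<le> (\<integral>y. cmod (cis (s * xc y)) \<partial>Q x)" by (rule integral_norm_bound)
  also have "\<dots> = 1" by (simp add: P.prob_space)
  finally show ?thesis unfolding cond_charf_def by (simp add: norm_mult)
qed

text \<open>Step (1) of the proof: the Markov property applied to the last increment.\<close>

lemma charf_Suc: "charf s (Suc k) = (\<integral>\<omega>. cis (s * T k \<omega>) * cond_charf s (X k \<omega>) \<partial>M)"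
proof -
  define F where "F p = cis (s * T_path k p) * cis (- (s * Qxc (p k)))" for p
  have "(\<lambda>p. p k) \<in> PiM {..k} (\<lambda>_. E) \<rightarrow>\<^sub>M E" by (rule measurable_component_singleton) simp
  then have Fm: "F \<in> borel_measurable (PiM {..k} (\<lambda>_. E))"
    unfolding F_def using measurable_compose[OF _ Qxc_measurable] by simp
  have gi: "integrable \<nu> (\<lambda>y. cis (s * xc y))"
    by (rule Bochner_Integration.integrable_bound[OF nu_integrable_const[of "1::complex"]]) (auto intro: measurable_nu)
  have "charf s (Suc k) = (\<integral>\<omega>. F (path k \<omega>) * cis (s * xc (X (Suc k) \<omega>)) \<partial>M)"
    unfolding charf_def F_def T_path_eq[symmetric]
    by (intro Bochner_Integration.integral_cong) (simp_all add: path_apply T_Suc cis_mult algebra_simps)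
  also have "\<dots> = (\<integral>\<omega>. F (path k \<omega>) * (\<integral>y. cis (s * xc y) \<partial>Q (X k \<omega>)) \<partial>M)"
    by (rule markov_property[OF Fm _ _ gi]) (auto simp: F_def norm_mult)
  also have "\<dots> = (\<integral>\<omega>. cis (s * T k \<omega>) * cond_charf s (X k \<omega>) \<partial>M)"
    unfolding F_def T_path_eq cond_charf_def by (intro Bochner_Integration.integral_cong) (simp_all add: path_apply)
  finally show ?thesis .
qed

definition taylor_rem :: "real \<Rightarrow> 'e \<Rightarrow> complex" where
  "taylor_rem s x = cond_charf s x - (1 - complex_of_real (s^2 / 2 * (\<psi> x + \<sigma>2)))"

lemma taylor_rem_measurable[measurable]: "taylor_rem s \<in> borel_measurable E"
  unfolding taylor_rem_def by measurable

lemma taylor_rem_integrable: "integrable \<nu> (taylor_rem s)"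
proof -
  interpret nu: prob_space \<nu> by (rule nu_prob(1))
  have "integrable \<nu> (cond_charf s)"
    by (rule nu.integrable_const_bound[where B=1]) (auto simp: space_nu cond_charf_bounded intro: measurable_nu)
  then show ?thesis unfolding taylor_rem_def using psi_integral(1) by auto
qed

lemma taylor_rem_pointwise:
  assumes x: "x \<in> space E" and i3: "integrable (Q x) (\<lambda>y. \<bar>xc y\<bar> ^ 3)"
    and i1: "integrable (Q x) xc" and i2: "integrable (Q x) (\<lambda>y. (xc y)\<^sup>2)"
  shows "cmod (taylor_rem s x) \<le> 2 / 3 * \<bar>s\<bar> ^ 3 * (Qop Q (\<lambda>y. \<bar>xc y\<bar> ^ 3) x + \<bar>Qxc x\<bar> ^ 3)"
proof -
  have m: "xc \<in> borel_measurable (Q x)" by (simp add: measurable_cong_sets[OF Q_prob(2)[OF x] refl])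
  have "cond_charf s x = (\<integral>y. cis (- (s * Qxc x)) * cis (s * xc y) \<partial>Q x)"
    unfolding cond_charf_def by simp
  also have "\<dots> = (\<integral>y. cis (s * (xc y - Qxc x)) \<partial>Q x)" by (simp add: cis_mult algebra_simps)
  finally have "cond_charf s x = (\<integral>y. cis (s * (xc y - Qxc x)) \<partial>Q x)" .
  moreover have "\<psi> x + \<sigma>2 = (\<integral>y. (xc y)\<^sup>2 \<partial>Q x) - (Qxc x)^2" unfolding psi_def Qop_def by simp
  ultimately show ?thesis
    using charfun_taylor3[OF Q_prob(1)[OF x] m i3 i1 i2, of "Qxc x" s]
    unfolding taylor_rem_def Qop_def by simp
qed

lemma taylor_rem_bound: "(\<integral>x. cmod (taylor_rem s x) \<partial>\<nu>) \<le> 4 / 3 * \<bar>s\<bar> ^ 3 * (\<integral>x. \<bar>xc x\<bar> ^ 3 \<partial>\<nu>)"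
proof -
  note I = invariant_integral[OF xc_cube_measurable xc_cube]
  have ib: "integrable \<nu> (\<lambda>x. 2 / 3 * \<bar>s\<bar> ^ 3 * (Qop Q (\<lambda>y. \<bar>xc y\<bar> ^ 3) x + \<bar>Qxc x\<bar> ^ 3))"
    using I(1) Qxc_cube(1) by simp
  have ae: "AE x in \<nu>. cmod (taylor_rem s x) \<le> 2 / 3 * \<bar>s\<bar> ^ 3 * (Qop Q (\<lambda>y. \<bar>xc y\<bar> ^ 3) x + \<bar>Qxc x\<bar> ^ 3)"
    using xc_moments_Q by eventually_elim (rule taylor_rem_pointwise, auto)
  have "(\<integral>x. cmod (taylor_rem s x) \<partial>\<nu>) \<le> (\<integral>x. 2 / 3 * \<bar>s\<bar> ^ 3 * (Qop Q (\<lambda>y. \<bar>xc y\<bar> ^ 3) x + \<bar>Qxc x\<bar> ^ 3) \<partial>\<nu>)"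
    by (rule integral_mono_AE[OF _ ib ae]) (use taylor_rem_integrable in simp)
  also have "\<dots> = 2 / 3 * \<bar>s\<bar> ^ 3 * ((\<integral>x. \<bar>xc x\<bar> ^ 3 \<partial>\<nu>) + (\<integral>x. \<bar>Qxc x\<bar> ^ 3 \<partial>\<nu>))"
    using I Qxc_cube(1) by simp
  also have "\<dots> \<le> 2 / 3 * \<bar>s\<bar> ^ 3 * ((\<integral>x. \<bar>xc x\<bar> ^ 3 \<partial>\<nu>) + (\<integral>x. \<bar>xc x\<bar> ^ 3 \<partial>\<nu>))"
    using Qxc_cube(2) by (intro mult_left_mono add_left_mono) auto
  finally show ?thesis by simp
qed

definition moment_const :: real where
  "moment_const = (\<integral>x. \<bar>xc x\<bar> ^ 3 \<partial>\<nu>) powr (1/3) + (\<integral>x. \<bar>Qxc x\<bar> ^ 3 \<partial>\<nu>) powr (1/3)"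

lemma moment_const_nonneg: "0 \<le> moment_const" unfolding moment_const_def by simp

text \<open>Hoelder's inequality for h(X_i) f(X_j), using stationarity.\<close>

lemma holder_along_chain:
  fixes h f :: "'e \<Rightarrow> real"
  assumes [measurable]: "h \<in> borel_measurable E" "f \<in> borel_measurable E"
    and h3: "integrable \<nu> (\<lambda>x. \<bar>h x\<bar> ^ 3)" and f32: "integrable \<nu> (\<lambda>x. \<bar>f x\<bar> powr (3/2))"
  shows "integrable M (\<lambda>\<omega>. \<bar>h (X i \<omega>)\<bar> * \<bar>f (X j \<omega>)\<bar>)"
    "(\<integral>\<omega>. \<bar>h (X i \<omega>)\<bar> * \<bar>f (X j \<omega>)\<bar> \<partial>M) \<le> (\<integral>x. \<bar>h x\<bar> ^ 3 \<partial>\<nu>) powr (1/3) * norm_3_2 f"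
proof -
  note h3X = integral_X[of "\<lambda>x. \<bar>h x\<bar> ^ 3" i] and f32X = integral_X[of "\<lambda>x. \<bar>f x\<bar> powr (3/2)" j]
  note H = holder_3_3_2[of "\<lambda>\<omega>. \<bar>h (X i \<omega>)\<bar>" M "\<lambda>\<omega>. \<bar>f (X j \<omega>)\<bar>"]
  show "integrable M (\<lambda>\<omega>. \<bar>h (X i \<omega>)\<bar> * \<bar>f (X j \<omega>)\<bar>)" using H h3X f32X h3 f32 by simp
  show "(\<integral>\<omega>. \<bar>h (X i \<omega>)\<bar> * \<bar>f (X j \<omega>)\<bar> \<partial>M) \<le> (\<integral>x. \<bar>h x\<bar> ^ 3 \<partial>\<nu>) powr (1/3) * norm_3_2 f"
    using H h3X f32X h3 f32 unfolding norm_3_2_def by simp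
qed

text \<open>One telescoping step: replacing f(X_(k+1)) by Qf(X_k) under the weight cis(s T_(k+1)) costs
  at most |s| moment_const \<parallel>f\<parallel>_(3/2), since the weight changes by at most |s U_(k+1)|.\<close>

lemma weighted_step:
  fixes f :: "'e \<Rightarrow> real"
  assumes fm[measurable]: "f \<in> borel_measurable E" and f32: "integrable \<nu> (\<lambda>x. \<bar>f x\<bar> powr (3/2))"
  shows "cmod ((\<integral>\<omega>. cis (s * T (Suc k) \<omega>) * complex_of_real (f (X (Suc k) \<omega>)) \<partial>M)
             - (\<integral>\<omega>. cis (s * T k \<omega>) * complex_of_real (Qop Q f (X k \<omega>)) \<partial>M))
         \<le> \<bar>s\<bar> * moment_const * norm_3_2 f"
proof -
  have fi: "integrable \<nu> f" by (rule integrable_of_powr_3_2[OF fm f32])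
  have fX: "integrable M (\<lambda>\<omega>. complex_of_real (f (X (Suc k) \<omega>)))"
    using integral_X(1)[of f "Suc k"] fi by simp
  define A1 where "A1 \<omega> = cis (s * T (Suc k) \<omega>) * complex_of_real (f (X (Suc k) \<omega>))" for \<omega>
  define A2 where "A2 \<omega> = cis (s * T k \<omega>) * complex_of_real (f (X (Suc k) \<omega>))" for \<omega>
  have i1: "integrable M A1" unfolding A1_def by (rule integrable_bounded_mult[OF fX]) (auto simp: T_path_eq)
  have i2: "integrable M A2" unfolding A2_def by (rule integrable_bounded_mult[OF fX]) (auto simp: T_path_eq)
  have "(\<integral>\<omega>. A2 \<omega> \<partial>M) = (\<integral>\<omega>. cis (s * T_path k (path k \<omega>)) * complex_of_real (f (X (Suc k) \<omega>)) \<partial>M)"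
    unfolding A2_def T_path_eq ..
  also have "\<dots> = (\<integral>\<omega>. cis (s * T_path k (path k \<omega>)) * (\<integral>y. complex_of_real (f y) \<partial>Q (X k \<omega>)) \<partial>M)"
    by (rule markov_property) (use fi in auto)
  finally have e2: "(\<integral>\<omega>. A2 \<omega> \<partial>M) = (\<integral>\<omega>. cis (s * T k \<omega>) * complex_of_real (Qop Q f (X k \<omega>)) \<partial>M)"
    unfolding T_path_eq Qop_def by simp
  have ptw: "cmod (A1 \<omega> - A2 \<omega>)
      \<le> \<bar>s\<bar> * (\<bar>xc (X (Suc k) \<omega>)\<bar> * \<bar>f (X (Suc k) \<omega>)\<bar> + \<bar>Qxc (X k \<omega>)\<bar> * \<bar>f (X (Suc k) \<omega>)\<bar>)" for \<omega>
  proof -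
    define U where "U = xc (X (Suc k) \<omega>) - Qxc (X k \<omega>)"
    have "A1 \<omega> - A2 \<omega> = cis (s * T k \<omega>) * (cis (s * U) - 1) * complex_of_real (f (X (Suc k) \<omega>))"
      unfolding A1_def A2_def U_def T_Suc by (simp add: cis_mult algebra_simps)
    then have "cmod (A1 \<omega> - A2 \<omega>) = cmod (cis (s * U) - 1) * \<bar>f (X (Suc k) \<omega>)\<bar>"
      by (simp add: norm_mult)
    also have "\<dots> \<le> \<bar>s * U\<bar> * \<bar>f (X (Suc k) \<omega>)\<bar>" by (intro mult_right_mono cis_approx1) simp
    also have "\<dots> \<le> \<bar>s\<bar> * ((\<bar>xc (X (Suc k) \<omega>)\<bar> + \<bar>Qxc (X k \<omega>)\<bar>) * \<bar>f (X (Suc k) \<omega>)\<bar>)"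
      unfolding U_def abs_mult mult.assoc by (intro mult_left_mono mult_right_mono abs_triangle_ineq4) auto
    finally show ?thesis by (simp add: algebra_simps)
  qed
  note h1 = holder_along_chain[OF xc_measurable fm xc_cube f32, of "Suc k" "Suc k"]
  note h2 = holder_along_chain[OF Qxc_measurable fm Qxc_cube(1) f32, of k "Suc k"]
  have "cmod ((\<integral>\<omega>. A1 \<omega> \<partial>M) - (\<integral>\<omega>. A2 \<omega> \<partial>M)) \<le> (\<integral>\<omega>. cmod (A1 \<omega> - A2 \<omega>) \<partial>M)"
    using i1 i2 by (simp flip: Bochner_Integration.integral_diff)
  also have "\<dots> \<le> (\<integral>\<omega>. \<bar>s\<bar> * (\<bar>xc (X (Suc k) \<omega>)\<bar> * \<bar>f (X (Suc k) \<omega>)\<bar>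
        + \<bar>Qxc (X k \<omega>)\<bar> * \<bar>f (X (Suc k) \<omega>)\<bar>) \<partial>M)"
    by (rule integral_mono) (use i1 i2 h1(1) h2(1) ptw in auto)
  also have "\<dots> = \<bar>s\<bar> * ((\<integral>\<omega>. \<bar>xc (X (Suc k) \<omega>)\<bar> * \<bar>f (X (Suc k) \<omega>)\<bar> \<partial>M)
        + (\<integral>\<omega>. \<bar>Qxc (X k \<omega>)\<bar> * \<bar>f (X (Suc k) \<omega>)\<bar> \<partial>M))"
    using h1(1) h2(1) by simp
  also have "\<dots> \<le> \<bar>s\<bar> * ((\<integral>x. \<bar>xc x\<bar> ^ 3 \<partial>\<nu>) powr (1/3) * norm_3_2 f
        + (\<integral>x. \<bar>Qxc x\<bar> ^ 3 \<partial>\<nu>) powr (1/3) * norm_3_2 f)"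
    by (intro mult_left_mono add_mono h1(2) h2(2)) simp
  also have "\<dots> = \<bar>s\<bar> * moment_const * norm_3_2 f" unfolding moment_const_def by (simp add: algebra_simps)
  finally show ?thesis unfolding e2 A1_def .
qed

lemma weighted_telescope:
  "cmod (\<integral>\<omega>. cis (s * T (i + j) \<omega>) * complex_of_real (psi_iter 0 (X (i + j) \<omega>)) \<partial>M)
    \<le> \<bar>s\<bar> * moment_const * (\<Sum>p<j. norm_3_2 (psi_iter p))
      + cmod (\<integral>\<omega>. cis (s * T i \<omega>) * complex_of_real (psi_iter j (X i \<omega>)) \<partial>M)"
proof (induction j arbitrary: i)
  case 0 then show ?case by simp
next
  case (Suc j)
  have step: "cmod (\<integral>\<omega>. cis (s * T (Suc i) \<omega>) * complex_of_real (psi_iter j (X (Suc i) \<omega>)) \<partial>M)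
     \<le> \<bar>s\<bar> * moment_const * norm_3_2 (psi_iter j)
       + cmod (\<integral>\<omega>. cis (s * T i \<omega>) * complex_of_real (psi_iter (Suc j) (X i \<omega>)) \<partial>M)"
    using weighted_step[OF psi_iter_measurable psi_iter_powr_3_2, of s i j] norm_triangle_ineq2
    unfolding psi_iter_Suc by (smt (verit))
  show ?case using Suc.IH[of "Suc i"] step by (simp add: algebra_simps)
qed

definition psi_sum :: real where "psi_sum = (\<Sum>p. norm_3_2 (psi_iter p))"

lemma psi_sum_nonneg: "0 \<le> psi_sum"
  unfolding psi_sum_def by (rule suminf_nonneg[OF norm_3_2_summable]) (simp add: norm_3_2_def)

text \<open>Step (3): going all the way back to time 0, where Q^m \<psi>(X_0) has mean zero.\<close>

lemma psi_weighted_bound: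
  "cmod (\<integral>\<omega>. cis (s * T m \<omega>) * complex_of_real (\<psi> (X m \<omega>)) \<partial>M) \<le> \<bar>s\<bar> * moment_const * psi_sum"
proof -
  have "(\<integral>\<omega>. cis (s * T 0 \<omega>) * complex_of_real (psi_iter m (X 0 \<omega>)) \<partial>M) = 0"
    using integral_X(2)[OF psi_iter_measurable, of m 0] psi_iter_centred by (simp add: T_0)
  moreover have "(\<Sum>p<m. norm_3_2 (psi_iter p)) \<le> psi_sum" unfolding psi_sum_def
    by (rule sum_le_suminf[OF norm_3_2_summable]) (auto simp: norm_3_2_def)
  ultimately show ?thesis
    using weighted_telescope[of s 0 m] moment_const_nonneg
    by (simp add: psi_iter_def) (smt (verit) abs_ge_zero mult_left_mono mult_nonneg_nonneg)
qed

definition K_rec :: real where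
  "K_rec = moment_const * psi_sum / 2 + 4 / 3 * (\<integral>x. \<bar>xc x\<bar> ^ 3 \<partial>\<nu>)"

lemma K_rec_nonneg: "0 \<le> K_rec"
  unfolding K_rec_def using moment_const_nonneg psi_sum_nonneg by simp

text \<open>Inserting the expansion of step (2) into step (1).\<close>

lemma charf_Suc_expansion:
  "charf s (Suc k) - complex_of_real (1 - s^2 * \<sigma>2 / 2) * charf s k
    = (\<integral>\<omega>. cis (s * T k \<omega>) * taylor_rem s (X k \<omega>) \<partial>M)
      - complex_of_real (s^2 / 2) * (\<integral>\<omega>. cis (s * T k \<omega>) * complex_of_real (\<psi> (X k \<omega>)) \<partial>M)"
proof -
  interpret prob_space M by (rule prob_M)
  define c where "c \<omega> = cis (s * T k \<omega>)" for \<omega>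
  have cm[measurable]: "c \<in> borel_measurable M" unfolding c_def by (simp add: T_path_eq)
  have cb: "cmod (c \<omega>) \<le> 1" for \<omega> unfolding c_def by simp
  have ipsi: "integrable M (\<lambda>\<omega>. complex_of_real (\<psi> (X k \<omega>)))"
    using integral_X(1)[OF psi_measurable, of k] psi_integral(1) by simp
  have irr: "integrable M (\<lambda>\<omega>. taylor_rem s (X k \<omega>))"
    using integral_X(1)[OF taylor_rem_measurable[of s], of k] taylor_rem_integrable by simp
  have i1: "integrable M c" by (rule integrable_const_bound[where B=1]) (auto simp: cb)
  note i2 = integrable_bounded_mult[OF ipsi cm cb] and i3 = integrable_bounded_mult[OF irr cm cb]
  have "charf s (Suc k) = (\<integral>\<omega>. complex_of_real (1 - s^2 * \<sigma>2 / 2) * c \<omega>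
       - complex_of_real (s^2 / 2) * (c \<omega> * complex_of_real (\<psi> (X k \<omega>))) + c \<omega> * taylor_rem s (X k \<omega>) \<partial>M)"
    unfolding charf_Suc c_def[symmetric] taylor_rem_def by (simp add: algebra_simps)
  also have "\<dots> = complex_of_real (1 - s^2 * \<sigma>2 / 2) * charf s k
       - complex_of_real (s^2 / 2) * (\<integral>\<omega>. c \<omega> * complex_of_real (\<psi> (X k \<omega>)) \<partial>M)
       + (\<integral>\<omega>. c \<omega> * taylor_rem s (X k \<omega>) \<partial>M)"
    unfolding charf_def c_def[symmetric] using i1 i2 i3 by simp
  finally show ?thesis unfolding c_def by simp
qed

lemma taylor_rem_weighted:
  "cmod (\<integral>\<omega>. cis (s * T k \<omega>) * taylor_rem s (X k \<omega>) \<partial>M) \<le> 4 / 3 * \<bar>s\<bar> ^ 3 * (\<integral>x. \<bar>xc x\<bar> ^ 3 \<partial>\<nu>)"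
proof -
  have irr: "integrable M (\<lambda>\<omega>. taylor_rem s (X k \<omega>))"
    using integral_X(1)[OF taylor_rem_measurable[of s], of k] taylor_rem_integrable by simp
  have i3: "integrable M (\<lambda>\<omega>. cis (s * T k \<omega>) * taylor_rem s (X k \<omega>))"
    by (rule integrable_bounded_mult[OF irr]) (auto simp: T_path_eq)
  have "cmod (\<integral>\<omega>. cis (s * T k \<omega>) * taylor_rem s (X k \<omega>) \<partial>M)
      \<le> (\<integral>\<omega>. cmod (cis (s * T k \<omega>) * taylor_rem s (X k \<omega>)) \<partial>M)"
    by (rule integral_norm_bound)
  also have "\<dots> = (\<integral>\<omega>. cmod (taylor_rem s (X k \<omega>)) \<partial>M)" by (simp add: norm_mult)
  also have "\<dots> = (\<integral>x. cmod (taylor_rem s x) \<partial>\<nu>)" using integral_X(2)[of "\<lambda>x. cmod (taylor_rem s x)" k] by simp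
  finally show ?thesis using taylor_rem_bound[of s] by linarith
qed

lemma charf_recursion:
  "cmod (charf s (Suc k) - complex_of_real (1 - s^2 * \<sigma>2 / 2) * charf s k) \<le> K_rec * \<bar>s\<bar> ^ 3"
proof -
  have psi_part: "cmod (complex_of_real (s^2 / 2) * (\<integral>\<omega>. cis (s * T k \<omega>) * complex_of_real (\<psi> (X k \<omega>)) \<partial>M))
      \<le> s^2 / 2 * (\<bar>s\<bar> * moment_const * psi_sum)"
  proof -
    have "cmod (complex_of_real (s^2 / 2)) = s^2 / 2" by (simp only: norm_of_real) simp
    then show ?thesis unfolding norm_mult by (simp only:) (rule mult_left_mono[OF psi_weighted_bound], simp)
  qed
  have "cmod (charf s (Suc k) - complex_of_real (1 - s^2 * \<sigma>2 / 2) * charf s k)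
      \<le> 4 / 3 * \<bar>s\<bar> ^ 3 * (\<integral>x. \<bar>xc x\<bar> ^ 3 \<partial>\<nu>) + s^2 / 2 * (\<bar>s\<bar> * moment_const * psi_sum)"
    unfolding charf_Suc_expansion
    by (rule order_trans[OF norm_triangle_ineq4 add_mono[OF taylor_rem_weighted psi_part]])
  also have "\<dots> = K_rec * \<bar>s\<bar> ^ 3" unfolding K_rec_def by (simp add: power2_eq_square power3_eq_cube algebra_simps)
  finally show ?thesis .
qed

lemma charf_0: "charf s 0 = 1"
  using prob_space.prob_space[OF prob_M] unfolding charf_def by (simp add: T_0)

lemma charf_power_approx:
  assumes y0: "0 < y" and y1: "y \<le> 1/2" and sy: "s^2 * \<sigma>2 / 2 = y"
  shows "cmod (charf s n - complex_of_real ((1 - y) ^ n)) \<le> 2 * K_rec * \<bar>s\<bar> / \<sigma>2"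
proof -
  have "cmod (charf s (Suc k) - complex_of_real (1 - y) * charf s k) \<le> K_rec * \<bar>s\<bar> ^ 3" for k
    using charf_recursion[of s k] unfolding sy .
  then have "cmod (charf s n - complex_of_real ((1 - y) ^ n)) \<le> K_rec * \<bar>s\<bar> ^ 3 * (\<Sum>j<n. (1 - y) ^ j)"
    using y1 by (intro perturbed_geometric[where a="charf s", OF charf_0]) auto
  also have "\<dots> \<le> K_rec * \<bar>s\<bar> ^ 3 * (1 / y)"
    using geometric_sum_le[of "1 - y" n] y0 y1 K_rec_nonneg by (intro mult_left_mono) auto
  also have "\<dots> = 2 * K_rec * \<bar>s\<bar> / \<sigma>2"
    using sy[symmetric] y0 sigma_pos by (simp add: power3_eq_cube power2_eq_square field_simps)
  finally show ?thesis .
qed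

text \<open>Choosing s = t / (sigma sqrt n) and comparing (1 - t^2/(2n))^n with the Gaussian.\<close>

lemma charf_gaussian_bound:
  "\<exists>C>0. \<forall>n::nat. \<forall>t::real. n \<ge> 1 \<longrightarrow> \<bar>t\<bar> \<le> sqrt (real n) \<longrightarrow>
     cmod ((\<integral>\<omega>. cis (t * (\<Sum>k\<in>{1..n}. xc (X k \<omega>) - Qxc (X (k - 1) \<omega>)) / (sqrt \<sigma>2 * sqrt (real n))) \<partial>M)
        - complex_of_real (exp (- t\<^sup>2 / 2)))
     \<le> C * \<bar>t\<bar> / sqrt (real n)"
proof (intro exI[of _ "2 * K_rec / (\<sigma>2 * sqrt \<sigma>2) + 1"] conjI allI impI)
  show "0 < 2 * K_rec / (\<sigma>2 * sqrt \<sigma>2) + 1" using K_rec_nonneg sigma_pos by (simp add: add_nonneg_pos)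
  fix n :: nat and t :: real
  assume n: "1 \<le> n" and tn: "\<bar>t\<bar> \<le> sqrt (real n)"
  define s where "s = t / (sqrt \<sigma>2 * sqrt (real n))"
  define y where "y = t\<^sup>2 / (2 * real n)"
  have np: "0 < real n" using n by simp
  have charf_eq: "(\<integral>\<omega>. cis (t * (\<Sum>k\<in>{1..n}. xc (X k \<omega>) - Qxc (X (k - 1) \<omega>)) / (sqrt \<sigma>2 * sqrt (real n))) \<partial>M)
      = charf s n"
    unfolding charf_def s_def T_def by (simp add: field_simps)
  have ty: "\<bar>t\<bar> / sqrt (real n) = sqrt (2 * y)" unfolding y_def using np by (simp add: real_sqrt_divide)
  show "cmod ((\<integral>\<omega>. cis (t * (\<Sum>k\<in>{1..n}. xc (X k \<omega>) - Qxc (X (k - 1) \<omega>)) / (sqrt \<sigma>2 * sqrt (real n))) \<partial>M)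
        - complex_of_real (exp (- t\<^sup>2 / 2)))
     \<le> (2 * K_rec / (\<sigma>2 * sqrt \<sigma>2) + 1) * \<bar>t\<bar> / sqrt (real n)"
  proof (cases "t = 0")
    case True then show ?thesis
      unfolding charf_eq s_def charf_def by (simp add: prob_space.prob_space[OF prob_M])
  next
    case False
    have y0: "0 < y" and y1: "y \<le> 1/2"
      using False np power_mono[OF tn, of 2] unfolding y_def by (auto simp: field_simps)
    have sy: "s^2 * \<sigma>2 / 2 = y"
      unfolding s_def y_def using sigma_pos np by (simp add: power_divide power_mult_distrib)
    have gauss: "exp (- t\<^sup>2 / 2) = exp (- y) ^ n"
      unfolding y_def using np by (simp flip: exp_of_nat_mult)
    have chain_part: "cmod (charf s n - complex_of_real ((1 - y) ^ n)) \<le> 2 * K_rec * \<bar>s\<bar> / \<sigma>2"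
      by (rule charf_power_approx[OF y0 y1 sy])
    have gauss_part: "cmod (complex_of_real ((1 - y) ^ n) - complex_of_real (exp (- y) ^ n)) \<le> \<bar>t\<bar> / sqrt (real n)"
    proof -
      have "3 * y / 2 \<le> sqrt (2 * y)"
        using y0 y1 by (intro real_le_rsqrt) (simp add: power2_eq_square mult_le_cancel_left1)
      then show ?thesis
        using exp_power_approx[OF y0 y1, of n] unfolding ty
        by (simp flip: of_real_diff del: of_real_power)
    qed
    have "cmod (charf s n - complex_of_real (exp (- y) ^ n)) \<le> 2 * K_rec * \<bar>s\<bar> / \<sigma>2 + \<bar>t\<bar> / sqrt (real n)"
      using norm_triangle_mono[OF chain_part gauss_part] by simp
    also have "\<dots> = (2 * K_rec / (\<sigma>2 * sqrt \<sigma>2) + 1) * \<bar>t\<bar> / sqrt (real n)"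
      unfolding s_def using sigma_pos np by (simp add: abs_mult abs_divide field_simps)
    finally show ?thesis unfolding charf_eq gauss .
  qed
qed

end

theorem proposition4p1:
  fixes M :: "'w measure" and E :: "'e measure" and \<nu> :: "'e measure"
    and Q :: "'e \<Rightarrow> 'e measure" and X :: "nat \<Rightarrow> 'w \<Rightarrow> 'e"
    and B :: "('e \<Rightarrow> complex) set" and nB :: "('e \<Rightarrow> complex) \<Rightarrow> real"
    and \<xi> :: "'e \<Rightarrow> real"
  assumes "transition_prob E Q"
    and "invariant_prob E Q \<nu>"
    and "markov_chain M E Q X"
    and "distr M E (X 0) = \<nu>"
    and "banach_fun_space E B nB"
    and "H1 E \<nu> Q B nB"
    and "H2 \<nu> Q (xi_check Q B nB \<xi>)"
    and "\<forall>f\<in>B. integrable \<nu> (\<lambda>x. (cmod (f x)) ^ 3)"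
    and "\<xi> \<in> borel_measurable E"
    and "(\<lambda>x. complex_of_real (\<xi> x)) \<in> B"
    and "(\<integral>x. \<xi> x \<partial>\<nu>) = 0"
    and "sigma2 \<nu> Q (xi_check Q B nB \<xi>) > 0"
  shows "\<exists>C>0. \<forall>n::nat. \<forall>t::real. n \<ge> 1 \<longrightarrow> \<bar>t\<bar> \<le> sqrt (real n) \<longrightarrow>
    cmod ((\<integral>\<omega>. cis (t * (\<Sum>k\<in>{1..n}. xi_check Q B nB \<xi> (X k \<omega>)
                                  - Qop Q (xi_check Q B nB \<xi>) (X (k - 1) \<omega>))
                    / (sqrt (sigma2 \<nu> Q (xi_check Q B nB \<xi>)) * sqrt (real n))) \<partial>M)
          - complex_of_real (exp (- t\<^sup>2 / 2)))
    \<le> C * \<bar>t\<bar> / sqrt (real n)"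
proof -
  interpret geometrically_ergodic E B nB \<nu> Q
    using assms(5,6) by unfold_locales
  have nuE: "sets \<nu> = sets E" using assms(2) unfolding invariant_prob_def by simp
  note xc = xi_check_moments[OF assms(8) nuE assms(10,11)]
  interpret clt_setting M E Q X \<nu> "xi_check Q B nB \<xi>"
    using assms(1-4,7,12) xc by unfold_locales
  show ?thesis by (rule charf_gaussian_bound)
qed

end
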